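(* Let $n\in\mathbb{R}^+\cup\{0\}$, $f\in D_{HK}$, and let $F\in C_0$ be the primitive of $f$. Then $$\mathcal{J}_a^{n}f=D(\mathcal{J}_a^{n}F).$$ Consequently, for every $j\in\mathbb{N}$ and $\phi\in\mathcal{D}(a,b)$, $$\langle D^{j}(\mathcal{J}_a^{n}f),\phi\rangle=(-1)^{j+1}\langle\mathcal{J}_a^{n}F,\phi^{(j+1)}\rangle.$$ Moreover, with $m=\lceil n\rceil$, $\mathcal{D}^{n}_af=D^{m+1}\mathcal{J}_a^{m-n}F$. For $0<n<1$, $\mathcal{D}^n_aF$ is a temperate distribution and $\mathcal{D}^n_aF=\mathcal{J}_a^{1-n}f$.
   Context: Fix real numbers $a<b$. $\mathcal{D}(a,b)$ is the space of real $C^\infty$ functions with compact support in $(a,b)$, $\mathcal{D}'(a,b)$ the space of distributions on $(a,b)$, $\langle T,\phi\rangle$ the action of a distribution on a test function (for integrable $T$, $\langle T,\phi\rangle=\int_a^b T\phi$), $D$ the distributional derivative and $D^m$ its $m$-fold iterate. Let $C_0=\{F\in C[a,b]:F(a)=0\}$. A distribution $f\in\mathcal{D}'(a,b)$ is Henstock–Kurzweil integrable if there is $F\in C_0$ with $DF=f$ (such $F$ is unique, the primitive of $f$); its distributional Henstock–Kurzweil integral is $\int_c^d f=F(d)-F(c)$. $D_{HK}$ is the space of these distributions with the Alexiewicz norm $\|f\|_A=\sup_{x\in[a,b]}|F(x)|$; it is a Banach space containing $L^1[a,b]$ as a dense subspace and containing $C[a,b]$. Riemann–Liouville fractional integral on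 $D_{HK}$: for $n\ge 1$, $\mathcal{J}_a^nf(x)=\frac{1}{\Gamma(n)}\int_a^x(x-t)^{n-1}f(t)\,dt$ ($a\le x\le b$); for $0<n<1$, $\mathcal{J}_a^nf(x)=\frac{1}{\Gamma(n)}\lim_{k\to\infty}\int_a^x(x-t)^{n-1}f_k(t)\,dt$ with $(f_k)\subset L^1[a,b]$, $\|f_k-f\|_A\to0$; $\mathcal{J}_a^0=I$. Riemann–Liouville fractional derivative: for $n\ge0$ and $m=\lceil n\rceil$ (least integer $\ge n$), $\mathcal{D}_a^nf=D^m\mathcal{J}_a^{m-n}f\in\mathcal{D}'(a,b)$, $\mathcal{D}_a^0=I$. *)

theory Defs
  imports "HOL-Analysis.Analysis"
begin

text \<open>Distributions on (a,b) are modelled as real functionals on real functions;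
  only their values on test functions matter (equality of distributions = distr_eq).\<close>

type_synonym distr = "(real \<Rightarrow> real) \<Rightarrow> real"

definition smooth_fun :: "(real \<Rightarrow> real) \<Rightarrow> bool" where
  "smooth_fun \<phi> \<longleftrightarrow>
     (\<forall>k x. ((deriv ^^ k) \<phi> has_real_derivative (deriv ^^ Suc k) \<phi> x) (at x))"

definition test_fun :: "real \<Rightarrow> real \<Rightarrow> (real \<Rightarrow> real) \<Rightarrow> bool" where
  "test_fun a b \<phi> \<longleftrightarrow> smooth_fun \<phi> \<and>
     (\<exists>c d. a < c \<and> c \<le> d \<and> d < b \<and> (\<forall>x. x \<notin> {c..d} \<longrightarrow> \<phi> x = 0))"

definition is_distribution :: "real \<Rightarrow> real \<Rightarrow> distr \<Rightarrow> bool" where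
  "is_distribution a b T \<longleftrightarrow>
     (\<forall>\<phi> \<psi> \<alpha> \<beta>. test_fun a b \<phi> \<and> test_fun a b \<psi> \<longrightarrow>
        T (\<lambda>x. \<alpha> * \<phi> x + \<beta> * \<psi> x) = \<alpha> * T \<phi> + \<beta> * T \<psi>) \<and>
     (\<forall>c d. a < c \<and> d < b \<longrightarrow> (\<exists>C N. \<forall>\<phi>. test_fun a b \<phi> \<and> (\<forall>x. x \<notin> {c..d} \<longrightarrow> \<phi> x = 0) \<longrightarrow>
        \<bar>T \<phi>\<bar> \<le> C * (\<Sum>j\<le>N. (SUP x. \<bar>(deriv ^^ j) \<phi> x\<bar>))))"

definition distr_eq :: "real \<Rightarrow> real \<Rightarrow> distr \<Rightarrow> distr \<Rightarrow> bool" where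
  "distr_eq a b S T \<longleftrightarrow> (\<forall>\<phi>. test_fun a b \<phi> \<longrightarrow> S \<phi> = T \<phi>)"

definition regular :: "real \<Rightarrow> real \<Rightarrow> (real \<Rightarrow> real) \<Rightarrow> distr" where
  "regular a b g = (\<lambda>\<phi>. integral {a..b} (\<lambda>x. g x * \<phi> x))"

definition Dd :: "distr \<Rightarrow> distr" where
  "Dd T = (\<lambda>\<phi>. - T (deriv \<phi>))"

definition Dpow :: "nat \<Rightarrow> distr \<Rightarrow> distr" where
  "Dpow m = Dd ^^ m"

definition hk_primitive :: "real \<Rightarrow> real \<Rightarrow> distr \<Rightarrow> (real \<Rightarrow> real) \<Rightarrow> bool" where
  "hk_primitive a b f F \<longleftrightarrow> continuous_on {a..b} F \<and> F a = 0 \<and> distr_eq a b (Dd (regular a b F)) f"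

definition HK_integrable :: "real \<Rightarrow> real \<Rightarrow> distr \<Rightarrow> bool" where
  "HK_integrable a b f \<longleftrightarrow> (\<exists>F. hk_primitive a b f F)"

text \<open>The primitive, normalised to vanish outside [a,b] (so that it is unique).\<close>
definition hk_prim :: "real \<Rightarrow> real \<Rightarrow> distr \<Rightarrow> real \<Rightarrow> real" where
  "hk_prim a b f = (THE F. hk_primitive a b f F \<and> (\<forall>x. x \<notin> {a..b} \<longrightarrow> F x = 0))"

text \<open>Alexiewicz norm, expressed through the primitive.\<close>
definition alex :: "real \<Rightarrow> real \<Rightarrow> (real \<Rightarrow> real) \<Rightarrow> real" where
  "alex a b F = (SUP x\<in>{a..b}. \<bar>F x\<bar>)"

text \<open>Distributional HK integral over [c,d] of f*g, f with primitive P, g absolutely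
  continuous with derivative g' (integration by parts: P g - int P dg).\<close>
definition hk_int_ac :: "(real \<Rightarrow> real) \<Rightarrow> (real \<Rightarrow> real) \<Rightarrow> (real \<Rightarrow> real) \<Rightarrow> real \<Rightarrow> real \<Rightarrow> real" where
  "hk_int_ac P g g' c d = P d * g d - P c * g c - integral {c..d} (\<lambda>t. P t * g' t)"

text \<open>Kernel t \<mapsto> (x-t)^(n-1) on [a,x] (value 0^(n-1) at t = x) and its t-derivative.\<close>
definition kern :: "real \<Rightarrow> real \<Rightarrow> real \<Rightarrow> real" where
  "kern n x t = (if n = 1 then 1 else (x - t) powr (n - 1))"

definition kern' :: "real \<Rightarrow> real \<Rightarrow> real \<Rightarrow> real" where
  "kern' n x t = (if n = 1 then 0 else - (n - 1) * (x - t) powr (n - 2))"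

definition rl_L1 :: "real \<Rightarrow> real \<Rightarrow> (real \<Rightarrow> real) \<Rightarrow> real \<Rightarrow> real" where
  "rl_L1 a n g x = (1 / Gamma n) * integral {a..x} (\<lambda>t. (x - t) powr (n - 1) * g t)"

text \<open>Riemann-Liouville integral of f in D_HK for n >= 1 (a function on [a,b]).\<close>
definition rl_hk :: "real \<Rightarrow> real \<Rightarrow> real \<Rightarrow> distr \<Rightarrow> real \<Rightarrow> real" where
  "rl_hk a b n f x = (1 / Gamma n) * hk_int_ac (hk_prim a b f) (kern n x) (kern' n x) a x"

text \<open>For 0 < n < 1: primitive (in C_0) of the Alexiewicz limit of J^n f_k, f_k in L^1,
  f_k \<rightarrow> f in the Alexiewicz norm.\<close>
definition rl_lt1_prim :: "real \<Rightarrow> real \<Rightarrow> real \<Rightarrow> distr \<Rightarrow> real \<Rightarrow> real" where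
  "rl_lt1_prim a b n f = (THE G. continuous_on {a..b} G \<and> G a = 0 \<and> (\<forall>x. x \<notin> {a..b} \<longrightarrow> G x = 0) \<and>
     (\<forall>fk :: nat \<Rightarrow> real \<Rightarrow> real.
        (\<forall>k. fk k absolutely_integrable_on {a..b}) \<and>
        (\<lambda>k. alex a b (\<lambda>x. integral {a..x} (fk k) - hk_prim a b f x)) \<longlonglongrightarrow> 0
        \<longrightarrow> (\<lambda>k. alex a b (\<lambda>x. integral {a..x} (rl_L1 a n (fk k)) - G x)) \<longlonglongrightarrow> 0))"

definition RL_int :: "real \<Rightarrow> real \<Rightarrow> real \<Rightarrow> distr \<Rightarrow> distr" where
  "RL_int a b n f =
     (if n = 0 then f
      else if n < 1 then Dd (regular a b (rl_lt1_prim a b n f))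
      else regular a b (rl_hk a b n f))"

definition RL_der :: "real \<Rightarrow> real \<Rightarrow> real \<Rightarrow> distr \<Rightarrow> distr" where
  "RL_der a b n f = Dpow (nat \<lceil>n\<rceil>) (RL_int a b (real (nat \<lceil>n\<rceil>) - n) f)"

definition schwartz_fun :: "(real \<Rightarrow> real) \<Rightarrow> bool" where
  "schwartz_fun \<phi> \<longleftrightarrow> smooth_fun \<phi> \<and>
     (\<forall>j k. bounded (range (\<lambda>x. x ^ k * (deriv ^^ j) \<phi> x)))"

definition tempered :: "distr \<Rightarrow> bool" where
  "tempered S \<longleftrightarrow>
     (\<forall>\<phi> \<psi> \<alpha> \<beta>. schwartz_fun \<phi> \<and> schwartz_fun \<psi> \<longrightarrow>
        S (\<lambda>x. \<alpha> * \<phi> x + \<beta> * \<psi> x) = \<alpha> * S \<phi> + \<beta> * S \<psi>) \<and>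
     (\<exists>C N. \<forall>\<phi>. schwartz_fun \<phi> \<longrightarrow>
        \<bar>S \<phi>\<bar> \<le> C * (\<Sum>j\<le>N. \<Sum>k\<le>N. (SUP x. \<bar>x ^ k * (deriv ^^ j) \<phi> x\<bar>)))"

definition temperate_on :: "real \<Rightarrow> real \<Rightarrow> distr \<Rightarrow> bool" where
  "temperate_on a b T \<longleftrightarrow> is_distribution a b T \<and>
     (\<exists>S. tempered S \<and> (\<forall>\<phi>. test_fun a b \<phi> \<longrightarrow> S \<phi> = T \<phi>))"

end

(*
  For \<nu> > 0 the Riemann-Liouville integral of a distribution f with primitive F is the
  distributional derivative of J\<^sup>\<nu> F, where J\<^sup>\<nu> is the classical Riemann-Liouville
  integral of integrable functions: for \<nu> \<ge> 1 this is integration by parts in the defining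
  formula, for \<nu> < 1 it holds because J\<^sup>\<nu> F is the Alexiewicz limit required by the
  definition. Applying this to the function F itself, whose primitive is \<integral>F, the semigroup
  law J\<^sup>\<nu> J\<^sup>1 = J\<^sup>\<nu>\<^sup>+\<^sup>1 = J\<^sup>1 J\<^sup>\<nu> (Fubini on a triangle) shows that J\<^sup>\<nu> maps the regular
  distribution of F to the regular distribution of the function J\<^sup>\<nu> F, whence J\<^sup>\<nu> f = D J\<^sup>\<nu> F. Everything else follows by
  differentiating, and D\<^sup>2 of a continuous function is tempered. The definitions pick a
  particular primitive; that it agrees with F is the du Bois-Reymond lemma, proved with a
  smooth step function built from exp (-1/x).
*)

theory Submission
  imports Defs "HOL-Computational_Algebra.Polynomial"
begin

fun Ck :: "nat \<Rightarrow> (real \<Rightarrow> real) \<Rightarrow> bool" where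
  "Ck 0 f = True"
| "Ck (Suc k) f = ((\<forall>x. f differentiable at x) \<and> Ck k (deriv f))"

lemma Ck_SucD: "Ck (Suc k) f \<Longrightarrow> Ck k f"
  by (induction k arbitrary: f) auto

lemma Ck_has_real_derivative: "Ck (Suc k) f \<Longrightarrow> (f has_real_derivative deriv f x) (at x)"
  by (simp add: DERIV_deriv_iff_real_differentiable)

lemma Ck_funpow_deriv: "Ck (k + m) f \<Longrightarrow> Ck m ((deriv ^^ k) f)"
  by (induction k arbitrary: f) (auto simp: funpow_Suc_right simp del: funpow.simps)

lemma smooth_fun_iff_Ck: "smooth_fun f \<longleftrightarrow> (\<forall>k. Ck k f)"
proof
  show "\<forall>k. Ck k f" if "smooth_fun f"
  proof
    fix k show "Ck k f"
      using that
    proof (induction k arbitrary: f)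
      case (Suc k)
      then have "f differentiable at x" for x
        using Suc.prems[unfolded smooth_fun_def, rule_format, of 0 x]
        by (auto simp: real_differentiable_def)
      moreover have "smooth_fun (deriv f)"
        using Suc.prems unfolding smooth_fun_def by (metis funpow_Suc_right o_apply)
      ultimately show ?case using Suc.IH by simp
    qed simp
  qed
  show "smooth_fun f" if "\<forall>k. Ck k f"
    unfolding smooth_fun_def
  proof (intro allI)
    fix k x
    have "Ck (Suc 0) ((deriv ^^ k) f)" using that Ck_funpow_deriv[of k "Suc 0" f] by simp
    then show "((deriv ^^ k) f has_real_derivative (deriv ^^ Suc k) f x) (at x)"
      by (simp add: DERIV_deriv_iff_real_differentiable)
  qed
qed

lemma Ck_const [simp]: "Ck k (\<lambda>x. c)"
proof (induction k arbitrary: c)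
  case (Suc k)
  have "deriv (\<lambda>x. c) = (\<lambda>x. 0)" by (rule ext) simp
  then show ?case using Suc by simp
qed simp

lemma Ck_ident [simp]: "Ck k (\<lambda>x. x)"
proof (cases k)
  case (Suc k')
  have "deriv (\<lambda>x. x) = (\<lambda>x. 1)" by (rule ext) simp
  then show ?thesis using Suc by simp
qed simp

lemma Ck_add: "Ck k f \<Longrightarrow> Ck k g \<Longrightarrow> Ck k (\<lambda>x. f x + g x)"
proof (induction k arbitrary: f g)
  case (Suc k)
  have "deriv (\<lambda>x. f x + g x) = (\<lambda>x. deriv f x + deriv g x)"
    using Suc.prems by (intro ext DERIV_imp_deriv DERIV_add Ck_has_real_derivative)
  then show ?case using Suc by auto
qed simp

lemma Ck_mult: "Ck k f \<Longrightarrow> Ck k g \<Longrightarrow> Ck k (\<lambda>x. f x * g x)"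
proof (induction k arbitrary: f g)
  case (Suc k)
  have "((\<lambda>x. f x * g x) has_real_derivative deriv f x * g x + f x * deriv g x) (at x)" for x
    using DERIV_mult[OF Suc.prems[THEN Ck_has_real_derivative]] by (simp add: algebra_simps)
  then have d: "deriv (\<lambda>x. f x * g x) = (\<lambda>x. deriv f x * g x + f x * deriv g x)"
    by (intro ext DERIV_imp_deriv)
  have "Ck k (\<lambda>x. deriv f x * g x)" "Ck k (\<lambda>x. f x * deriv g x)"
    using Suc.IH Suc.prems Ck_SucD by auto
  then show ?case using Suc by (auto simp: d intro!: Ck_add)
qed simp

lemma Ck_compose: "Ck k f \<Longrightarrow> Ck k g \<Longrightarrow> Ck k (\<lambda>x. f (g x))"
proof (induction k arbitrary: f g)
  case (Suc k)
  have chain: "((\<lambda>x. f (g x)) has_real_derivative deriv f (g x) * deriv g x) (at x)" for x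
    using Suc.prems by (intro DERIV_chain2 Ck_has_real_derivative)
  then have d: "deriv (\<lambda>x. f (g x)) = (\<lambda>x. deriv f (g x) * deriv g x)"
    by (intro ext DERIV_imp_deriv)
  have "Ck k (\<lambda>x. deriv f (g x))" using Suc.IH Suc.prems Ck_SucD by auto
  then have "Ck k (\<lambda>x. deriv f (g x) * deriv g x)" using Suc by (auto intro: Ck_mult)
  moreover have "(\<lambda>x. f (g x)) differentiable at x" for x
    using chain by (auto simp: real_differentiable_def)
  ultimately show ?case by (simp add: d)
qed simp

lemma Ck_cmult: "Ck k f \<Longrightarrow> Ck k (\<lambda>x. c * f x)"
  using Ck_mult[of k "\<lambda>x. c" f] by simp

lemma Ck_diff: "Ck k f \<Longrightarrow> Ck k g \<Longrightarrow> Ck k (\<lambda>x. f x - g x)"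
  using Ck_add[of k f "\<lambda>x. (-1) * g x"] Ck_cmult[of k g "-1"] by simp

lemma Ck_affine:
  assumes "Ck k f"
  shows "Ck k (\<lambda>x. f (c * x + d))"
proof -
  have "Ck k (\<lambda>x. c * x + d)" by (intro Ck_add Ck_cmult Ck_ident Ck_const)
  from Ck_compose[OF assms this] show ?thesis .
qed

lemma Ck_imp_continuous_on: "Ck (Suc k) f \<Longrightarrow> continuous_on S f"
  by (intro continuous_at_imp_continuous_on ballI differentiable_imp_continuous_within) auto

section \<open>A smooth step function\<close>

text \<open>All derivatives of \<open>exp (-1/x)\<close> (extended by \<open>0\<close> to \<open>x \<le> 0\<close>) have the form
  \<open>p (1/x) * exp (-1/x)\<close> for a polynomial \<open>p\<close>.\<close>

definition flat_exp :: "real poly \<Rightarrow> real \<Rightarrow> real" where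
  "flat_exp p x = (if x \<le> 0 then 0 else poly p (1/x) * exp (-1/x))"

definition flat_exp_deriv_poly :: "real poly \<Rightarrow> real poly" where
  "flat_exp_deriv_poly p = [:0,0,1:] * (p - pderiv p)"

lemma poly_times_exp_neg_tendsto_0: "((\<lambda>z. poly (p::real poly) z * exp (-z)) \<longlongrightarrow> 0) at_top"
proof -
  have "((\<lambda>z. \<Sum>i\<le>degree p. coeff p i * (z ^ i / exp z)) \<longlongrightarrow> (\<Sum>i\<le>degree p. coeff p i * 0)) at_top"
    by (intro tendsto_intros tendsto_power_div_exp_0)
  moreover have "poly p z * exp (-z) = (\<Sum>i\<le>degree p. coeff p i * (z ^ i / exp z))" for z
    by (simp add: poly_altdef sum_distrib_right exp_minus divide_inverse mult.assoc)
  ultimately show ?thesis by simp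
qed

lemma flat_exp_tendsto_0: "(flat_exp p \<longlongrightarrow> 0) (at_right 0)"
proof -
  have "((\<lambda>y. poly p (inverse y) * exp (- inverse y)) \<longlongrightarrow> 0) (at_right 0)"
    using filterlim_compose[OF poly_times_exp_neg_tendsto_0 filterlim_inverse_at_top_right] by simp
  then show ?thesis
    by (rule Lim_transform_eventually)
       (auto simp: eventually_at_right_field flat_exp_def divide_inverse intro!: exI[of _ 1])
qed

lemma has_real_derivative_flat_exp_0: "(flat_exp p has_real_derivative 0) (at 0)"
proof -
  have "flat_exp ([:0,1:] * p) = (\<lambda>y. flat_exp p y / y)"
    by (simp add: flat_exp_def fun_eq_iff)
  then have right: "((\<lambda>y. flat_exp p y / y) \<longlongrightarrow> 0) (at_right 0)"
    using flat_exp_tendsto_0[of "[:0,1:] * p"] by simp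
  have "((\<lambda>y. flat_exp p y / y) \<longlongrightarrow> 0) (at_left 0)"
    by (rule Lim_transform_eventually[of "\<lambda>y. 0"])
       (auto simp: eventually_at_left_field flat_exp_def intro!: exI[of _ "-1"])
  with right have "((\<lambda>y. (flat_exp p y - flat_exp p 0) / (y - 0)) \<longlongrightarrow> 0) (at 0)"
    by (simp add: flat_exp_def filterlim_split_at)
  then show ?thesis by (simp add: has_field_derivative_iff)
qed

lemma has_real_derivative_flat_exp_pos:
  assumes x: "x > 0"
  shows "(flat_exp p has_real_derivative flat_exp (flat_exp_deriv_poly p) x) (at x)"
proof -
  have inv: "((\<lambda>y. 1/y) has_real_derivative -1/x^2) (at x)"
    using x by (auto intro!: derivative_eq_intros simp: power2_eq_square divide_inverse)
  have "((\<lambda>y. poly p (1/y)) has_real_derivative poly (pderiv p) (1/x) * (-1/x^2)) (at x)"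
    by (rule DERIV_chain2[OF poly_DERIV inv])
  moreover have "((\<lambda>y. exp (-1/y)) has_real_derivative exp (-1/x) * (1/x^2)) (at x)"
    using DERIV_chain2[OF DERIV_exp DERIV_minus[OF inv]] by simp
  ultimately have "((\<lambda>y. poly p (1/y) * exp (-1/y)) has_real_derivative
      poly (pderiv p) (1/x) * (-1/x^2) * exp (-1/x) + exp (-1/x) * (1/x^2) * poly p (1/x)) (at x)"
    by (rule DERIV_mult)
  moreover have "poly (pderiv p) (1/x) * (-1/x^2) * exp (-1/x) + exp (-1/x) * (1/x^2) * poly p (1/x)
      = flat_exp (flat_exp_deriv_poly p) x"
  proof -
    have "poly (flat_exp_deriv_poly p) (1/x) = (1/x)^2 * (poly p (1/x) - poly (pderiv p) (1/x))"
      by (simp add: flat_exp_deriv_poly_def power2_eq_square)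
    then have "flat_exp (flat_exp_deriv_poly p) x
        = (1/x)^2 * (poly p (1/x) - poly (pderiv p) (1/x)) * exp (-1/x)"
      using x by (simp add: flat_exp_def)
    then show ?thesis using x by (simp add: field_simps)
  qed
  ultimately have "((\<lambda>y. poly p (1/y) * exp (-1/y)) has_real_derivative
      flat_exp (flat_exp_deriv_poly p) x) (at x)"
    by (rule DERIV_cong)
  then show ?thesis
    by (rule has_field_derivative_transform_within_open[of _ _ _ "{0<..}"])
       (use x in \<open>auto simp: flat_exp_def\<close>)
qed

lemma has_real_derivative_flat_exp:
  "(flat_exp p has_real_derivative flat_exp (flat_exp_deriv_poly p) x) (at x)"
proof -
  consider "x < 0" | "x = 0" | "x > 0" by linarith
  then show ?thesis
  proof cases
    case 1
    then have "((\<lambda>y. 0) has_real_derivative flat_exp (flat_exp_deriv_poly p) x) (at x)"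
      by (simp add: flat_exp_def)
    then show ?thesis
      by (rule has_field_derivative_transform_within_open[of _ _ _ "{..<0}"])
         (use 1 in \<open>auto simp: flat_exp_def\<close>)
  next
    case 2
    then show ?thesis using has_real_derivative_flat_exp_0 by (simp add: flat_exp_def)
  qed (rule has_real_derivative_flat_exp_pos)
qed

lemma Ck_flat_exp: "Ck k (flat_exp p)"
proof (induction k arbitrary: p)
  case (Suc k)
  have "deriv (flat_exp p) = flat_exp (flat_exp_deriv_poly p)"
    using has_real_derivative_flat_exp by (intro ext DERIV_imp_deriv)
  moreover have "flat_exp p differentiable at x" for x
    using has_real_derivative_flat_exp by (auto simp: real_differentiable_def)
  ultimately show ?case using Suc by simp
qed simp

definition bump :: "real \<Rightarrow> real" where
  "bump t = flat_exp 1 t * flat_exp 1 (1 - t)"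

lemma bump_eq: "bump t = (if 0 < t \<and> t < 1 then exp (-1/t) * exp (-1/(1 - t)) else 0)"
  by (simp add: bump_def flat_exp_def)

lemma Ck_bump: "Ck k bump"
  unfolding bump_def using Ck_affine[OF Ck_flat_exp, of k 1 "-1" 1]
  by (intro Ck_mult Ck_flat_exp) simp

lemma continuous_on_bump: "continuous_on S bump"
  by (rule Ck_imp_continuous_on[OF Ck_bump[of "Suc 0"]])

lemma bump_nonneg: "bump t \<ge> 0"
  by (simp add: bump_eq)

lemma bump_eq_0: "t \<le> 0 \<or> t \<ge> 1 \<Longrightarrow> bump t = 0"
  by (auto simp: bump_eq)

lemma integral_bump_eq_0: "(\<And>t. t \<in> {u..v} \<Longrightarrow> t \<le> 0 \<or> t \<ge> 1) \<Longrightarrow> integral {u..v} bump = 0"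
  using integral_cong[of "{u..v}" bump "\<lambda>_. 0"] bump_eq_0 by simp

definition bump_mass :: real where
  "bump_mass = integral {0..1} bump"

lemma bump_mass_pos: "bump_mass > 0"
proof -
  have "integral {1/4..3/4::real} (\<lambda>t. exp (-4) * exp (-4)) \<le> integral {1/4..3/4} bump"
  proof (intro integral_le integrable_continuous_interval continuous_on_bump continuous_on_const ballI)
    fix t :: real assume t: "t \<in> {1/4..3/4}"
    then have "exp (-4) \<le> exp (-1/t)" "exp (-4) \<le> exp (-1/(1 - t))"
      by (auto simp: field_simps)
    then show "exp (-4) * exp (-4) \<le> bump t"
      using t by (auto simp: bump_eq intro: mult_mono)
  qed
  also have "\<dots> \<le> bump_mass"
    unfolding bump_mass_def
    by (intro integral_subset_le integrable_continuous_interval continuous_on_bump)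
       (auto simp: bump_nonneg)
  finally have "exp (-4) * exp (-4) \<le> 2 * bump_mass" by simp
  moreover have "exp (-4) * exp (-4) > (0::real)" by simp
  ultimately show ?thesis by linarith
qed

definition smooth_step :: "real \<Rightarrow> real" where
  "smooth_step x = integral {-1..x} bump / bump_mass"

lemma smooth_step_eq_0: "x \<le> 0 \<Longrightarrow> smooth_step x = 0"
  using integral_bump_eq_0[of "-1" x] by (simp add: smooth_step_def)

lemma smooth_step_eq_1: "x \<ge> 1 \<Longrightarrow> smooth_step x = 1"
proof -
  assume x: "x \<ge> 1"
  have int: "bump integrable_on {u..v}" for u v
    by (intro integrable_continuous_interval continuous_on_bump)
  have "integral {-1..x} bump = integral {-1..0} bump + (integral {0..1} bump + integral {1..x} bump)"
    using x int by (simp add: Henstock_Kurzweil_Integration.integral_combine)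
  also have "\<dots> = bump_mass"
    using integral_bump_eq_0[of "-1" 0] integral_bump_eq_0[of 1 x] by (simp add: bump_mass_def)
  finally show ?thesis using bump_mass_pos by (simp add: smooth_step_def)
qed

lemma has_real_derivative_smooth_step: "(smooth_step has_real_derivative bump x / bump_mass) (at x)"
proof (cases "x < 0")
  case True
  then have "((\<lambda>y. 0) has_real_derivative bump x / bump_mass) (at x)"
    by (simp add: bump_eq_0)
  then show ?thesis
    by (rule has_field_derivative_transform_within_open[of _ _ _ "{..<0}"])
       (use True in \<open>auto simp: smooth_step_eq_0\<close>)
next
  case False
  have "((\<lambda>u. integral {-1..u} bump) has_real_derivative bump x) (at x within {-1..x+1})"
    using False by (intro integral_has_real_derivative continuous_on_bump) auto
  moreover have "at x within {-1..x+1} = at x"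
    using False by (intro at_within_interior) auto
  ultimately show ?thesis
    unfolding smooth_step_def by (intro DERIV_cdivide) simp
qed

lemma Ck_smooth_step: "Ck k smooth_step"
proof (cases k)
  case (Suc k')
  have "deriv smooth_step = (\<lambda>x. (1 / bump_mass) * bump x)"
    using has_real_derivative_smooth_step by (intro ext DERIV_imp_deriv) simp
  moreover have "smooth_step differentiable at x" for x
    using has_real_derivative_smooth_step by (auto simp: real_differentiable_def)
  moreover have "Ck k' (\<lambda>x. (1 / bump_mass) * bump x)"
    by (rule Ck_cmult[OF Ck_bump])
  ultimately show ?thesis using Suc by simp
qed simp

definition mollifier :: "real \<Rightarrow> real \<Rightarrow> real \<Rightarrow> real" where
  "mollifier p e y = bump ((y - p) / e) / bump_mass / e"

lemma has_real_derivative_smooth_step_rescaled: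
  "((\<lambda>y. smooth_step ((y - p) / e)) has_real_derivative mollifier p e y) (at y)"
proof -
  have "((\<lambda>y. y - p) has_real_derivative 1) (at y)"
    by (auto intro!: derivative_eq_intros)
  from DERIV_cdivide[OF this, of e] have "((\<lambda>y. (y - p) / e) has_real_derivative 1 / e) (at y)"
    by simp
  from DERIV_chain2[OF has_real_derivative_smooth_step this] show ?thesis
    by (simp add: mollifier_def)
qed

lemma Ck_smooth_step_rescaled: "Ck k (\<lambda>y. smooth_step ((y - p) / e))"
  using Ck_affine[OF Ck_smooth_step, of k "1/e" "- p / e"] by (simp add: diff_divide_distrib)

lemma mollifier_nonneg: "e > 0 \<Longrightarrow> mollifier p e y \<ge> 0"
  using bump_mass_pos by (simp add: mollifier_def bump_nonneg)

lemma continuous_on_mollifier: "continuous_on S (mollifier p e)"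
  using bump_mass_pos
  by (cases "e = 0")
     (auto simp: mollifier_def intro!: continuous_intros continuous_on_compose2[OF continuous_on_bump[of UNIV]])

lemma mollifier_eq_0: "e > 0 \<Longrightarrow> y \<notin> {p<..<p+e} \<Longrightarrow> mollifier p e y = 0"
  by (auto simp: mollifier_def bump_eq_0 field_simps)

lemma integral_mollifier:
  assumes "e > 0" "a \<le> p" "p + e \<le> b"
  shows "integral {a..b} (mollifier p e) = 1"
proof -
  have "(mollifier p e has_integral
      (smooth_step ((b - p) / e) - smooth_step ((a - p) / e))) {a..b}"
    using assms
    by (intro fundamental_theorem_of_calculus)
       (auto intro!: DERIV_subset[OF has_real_derivative_smooth_step_rescaled]
         simp: has_real_derivative_iff_has_vector_derivative[symmetric])
  moreover have "smooth_step ((b - p) / e) = 1" "smooth_step ((a - p) / e) = 0"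
    using assms by (auto intro!: smooth_step_eq_1 smooth_step_eq_0 simp: field_simps)
  ultimately show ?thesis by (simp add: integral_unique)
qed

lemma integral_mollifier_approx:
  assumes e: "e > 0" and p: "a \<le> p" "p + e \<le> b"
    and H: "continuous_on {a..b} H"
    and close: "\<And>y. y \<in> {p..p+e} \<Longrightarrow> \<bar>H y - H p\<bar> \<le> \<eta>"
  shows "\<bar>integral {a..b} (\<lambda>y. H y * mollifier p e y) - H p\<bar> \<le> \<eta>"
proof -
  have int: "(\<lambda>y. c y * mollifier p e y) integrable_on {a..b}" if "continuous_on {a..b} c" for c
    by (intro integrable_continuous_interval continuous_on_mult that continuous_on_mollifier)
  have "integral {a..b} (\<lambda>y. H y * mollifier p e y) - H p
      = integral {a..b} (\<lambda>y. (H y - H p) * mollifier p e y)"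
    using integral_mollifier[OF assms(1-3)] int[OF H] int[OF continuous_on_const[of _ "H p"]]
    by (simp add: left_diff_distrib integral_diff)
  also have "norm \<dots> \<le> integral {a..b} (\<lambda>y. \<eta> * mollifier p e y)"
  proof (intro integral_norm_bound_integral int continuous_intros H ballI)
    fix y assume "y \<in> {a..b}"
    show "norm ((H y - H p) * mollifier p e y) \<le> \<eta> * mollifier p e y"
      using close[of y] mollifier_nonneg[OF e, of p y] mollifier_eq_0[OF e, of y p]
      by (cases "y \<in> {p<..<p+e}") (auto simp: abs_mult mult_right_mono)
  qed
  also have "\<dots> = \<eta>"
    using integral_mollifier[OF assms(1-3)] by simp
  finally show ?thesis by simp
qed

lemma integral_mollifier_close:
  assumes H: "continuous_on {a..b} H" and p: "a \<le> p" "p < b" and \<eta>: "\<eta> > 0"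
  shows "\<exists>d>0. \<forall>e. 0 < e \<and> e < d \<longrightarrow> \<bar>integral {a..b} (\<lambda>y. H y * mollifier p e y) - H p\<bar> \<le> \<eta>"
proof -
  obtain \<delta> where \<delta>: "\<delta> > 0" "\<forall>y\<in>{a..b}. dist y p < \<delta> \<longrightarrow> dist (H y) (H p) < \<eta>"
    using H p \<eta> unfolding continuous_on_iff by (meson atLeastAtMost_iff less_imp_le)
  show ?thesis
  proof (intro exI[of _ "min \<delta> (b - p)"] conjI allI impI)
    fix e assume e: "0 < e \<and> e < min \<delta> (b - p)"
    show "\<bar>integral {a..b} (\<lambda>y. H y * mollifier p e y) - H p\<bar> \<le> \<eta>"
    proof (rule integral_mollifier_approx[OF _ p(1) _ H])
      fix y assume "y \<in> {p..p + e}"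
      then show "\<bar>H y - H p\<bar> \<le> \<eta>"
        using \<delta>(2)[rule_format, of y] e p by (auto simp: dist_real_def)
    qed (use e in auto)
  qed (use \<delta> p in auto)
qed

lemma test_fun_Ck: "test_fun a b \<phi> \<Longrightarrow> Ck k \<phi>"
  by (auto simp: test_fun_def smooth_fun_iff_Ck)

lemma test_fun_has_real_derivative:
  "test_fun a b \<phi> \<Longrightarrow> (\<phi> has_real_derivative deriv \<phi> x) (at x)"
  using Ck_has_real_derivative[OF test_fun_Ck[of a b \<phi> "Suc 0"]] .

lemma test_fun_continuous_on: "test_fun a b \<phi> \<Longrightarrow> continuous_on S \<phi>"
  using Ck_imp_continuous_on[OF test_fun_Ck[of a b \<phi> "Suc 0"]] .

lemma test_fun_vanishes_at_ends: "test_fun a b \<phi> \<Longrightarrow> \<phi> a = 0 \<and> \<phi> b = 0"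
  unfolding test_fun_def by force

lemma test_fun_deriv: "test_fun a b \<phi> \<Longrightarrow> test_fun a b (deriv \<phi>)"
proof -
  assume t: "test_fun a b \<phi>"
  then obtain c d where cd: "a < c" "c \<le> d" "d < b" "\<And>x. x \<notin> {c..d} \<Longrightarrow> \<phi> x = 0"
    by (auto simp: test_fun_def)
  have "Ck k (deriv \<phi>)" for k
    using test_fun_Ck[OF t, of "Suc k"] by simp
  then have "smooth_fun (deriv \<phi>)"
    by (simp add: smooth_fun_iff_Ck)
  moreover have "deriv \<phi> x = 0" if "x \<notin> {c..d}" for x
  proof (rule DERIV_imp_deriv)
    show "(\<phi> has_real_derivative 0) (at x)"
      by (rule has_field_derivative_transform_within_open[of "\<lambda>y. 0" _ _ "- {c..d}"])
         (use that cd in auto)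
  qed
  ultimately show ?thesis using cd by (auto simp: test_fun_def)
qed

lemma test_fun_funpow_deriv: "test_fun a b \<phi> \<Longrightarrow> test_fun a b ((deriv ^^ k) \<phi>)"
  by (induction k) (auto intro: test_fun_deriv)

lemma bdd_above_abs_test_fun: "test_fun a b \<phi> \<Longrightarrow> bdd_above (range (\<lambda>x. \<bar>\<phi> x\<bar>))"
proof -
  assume t: "test_fun a b \<phi>"
  then obtain c d where cd: "\<And>x. x \<notin> {c..d} \<Longrightarrow> \<phi> x = 0"
    by (auto simp: test_fun_def)
  have "bounded (\<phi> ` {c..d})"
    by (intro compact_imp_bounded compact_continuous_image test_fun_continuous_on[OF t]) auto
  then obtain M where "\<forall>x\<in>{c..d}. \<bar>\<phi> x\<bar> \<le> M"
    by (auto simp: bounded_real)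
  then have "\<bar>\<phi> x\<bar> \<le> max M 0" for x
    using cd[of x] by (cases "x \<in> {c..d}") force+
  then show ?thesis by (intro bdd_aboveI2)
qed

lemma test_fun_smooth_step_diff:
  assumes "e > 0" "a < p" "p < q" "q + e < b"
  shows "test_fun a b (\<lambda>y. smooth_step ((y - p) / e) - smooth_step ((y - q) / e))"
proof -
  have "smooth_fun (\<lambda>y. smooth_step ((y - p) / e) - smooth_step ((y - q) / e))"
    unfolding smooth_fun_iff_Ck by (intro allI Ck_diff Ck_smooth_step_rescaled)
  moreover have "smooth_step ((y - p) / e) - smooth_step ((y - q) / e) = 0"
    if "y \<notin> {p..q+e}" for y
  proof (cases "y < p")
    case True
    then show ?thesis using assms by (simp add: smooth_step_eq_0 divide_nonpos_pos)
  next
    case False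
    then have "y > q + e" using that by auto
    then have "e \<le> y - p" "e \<le> y - q" using assms by linarith+
    then have "(y - p) / e \<ge> 1" "(y - q) / e \<ge> 1"
      by (simp_all add: le_divide_eq_1_pos[OF assms(1)])
    then show ?thesis by (simp add: smooth_step_eq_1)
  qed
  moreover have "a < p" "p \<le> q + e" "q + e < b"
    using assms by auto
  ultimately show ?thesis
    unfolding test_fun_def by blast
qed

section \<open>The du Bois-Reymond lemma and uniqueness of primitives\<close>

lemma du_Bois_Reymond_interior:
  assumes H: "continuous_on {a..b} H"
    and orth: "\<And>\<phi>. test_fun a b \<phi> \<Longrightarrow> integral {a..b} (\<lambda>x. H x * deriv \<phi> x) = 0"
    and pq: "a < p" "p < q" "q < b"
  shows "H p = H q"
proof (rule ccontr)
  assume "H p \<noteq> H q"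
  define \<eta> where "\<eta> = \<bar>H p - H q\<bar> / 3"
  have \<eta>: "\<eta> > 0" using \<open>H p \<noteq> H q\<close> by (simp add: \<eta>_def)
  obtain dp where dp: "dp > 0"
    "\<And>e. 0 < e \<Longrightarrow> e < dp \<Longrightarrow> \<bar>integral {a..b} (\<lambda>y. H y * mollifier p e y) - H p\<bar> \<le> \<eta>"
    using integral_mollifier_close[OF H _ _ \<eta>, of p] pq by auto
  obtain dq where dq: "dq > 0"
    "\<And>e. 0 < e \<Longrightarrow> e < dq \<Longrightarrow> \<bar>integral {a..b} (\<lambda>y. H y * mollifier q e y) - H q\<bar> \<le> \<eta>"
    using integral_mollifier_close[OF H _ _ \<eta>, of q] pq by auto
  define e where "e = min (min dp dq) (b - q) / 2"
  have "0 < min (min dp dq) (b - q)" "min (min dp dq) (b - q) \<le> dp"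
    "min (min dp dq) (b - q) \<le> dq" "min (min dp dq) (b - q) \<le> b - q"
    using dp(1) dq(1) pq by auto
  then have e: "e > 0" "e < dp" "e < dq" "q + e < b"
    unfolding e_def by linarith+
  \<comment> \<open>A smooth approximation of the indicator of \<open>[p, q]\<close>; its derivative compares mollified
    values of \<open>H\<close> near \<open>p\<close> and near \<open>q\<close>.\<close>
  have "((\<lambda>y. smooth_step ((y - p) / e) - smooth_step ((y - q) / e)) has_real_derivative
      mollifier p e y - mollifier q e y) (at y)" for y
    by (intro DERIV_diff has_real_derivative_smooth_step_rescaled)
  then have "deriv (\<lambda>y. smooth_step ((y - p) / e) - smooth_step ((y - q) / e))
      = (\<lambda>y. mollifier p e y - mollifier q e y)"
    by (intro ext DERIV_imp_deriv)
  then have "integral {a..b} (\<lambda>y. H y * (mollifier p e y - mollifier q e y)) = 0"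
    using orth[OF test_fun_smooth_step_diff[OF e(1) pq(1,2) e(4)]] by simp
  moreover have "(\<lambda>y. H y * mollifier r e y) integrable_on {a..b}" for r
    by (intro integrable_continuous_interval continuous_on_mult H continuous_on_mollifier)
  ultimately have "integral {a..b} (\<lambda>y. H y * mollifier p e y) = integral {a..b} (\<lambda>y. H y * mollifier q e y)"
    by (simp add: right_diff_distrib integral_diff)
  with dp(2)[OF e(1,2)] dq(2)[OF e(1,3)] have "\<bar>H p - H q\<bar> \<le> 2 * \<eta>" by linarith
  then show False using \<eta> by (simp add: \<eta>_def)
qed

lemma du_Bois_Reymond:
  assumes ab: "a < b" and H: "continuous_on {a..b} H"
    and orth: "\<And>\<phi>. test_fun a b \<phi> \<Longrightarrow> integral {a..b} (\<lambda>x. H x * deriv \<phi> x) = 0"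
    and x: "x \<in> {a..b}"
  shows "H x = H a"
proof -
  define m where "m = (a + b) / 2"
  have m: "a < m" "m < b" using ab by (auto simp: m_def)
  have const: "H y = H m" if "y \<in> {a<..<b}" for y
  proof (cases y m rule: linorder_cases)
    case less
    then show ?thesis using du_Bois_Reymond_interior[OF H orth, of y m] that m by simp
  next
    case greater
    then show ?thesis using du_Bois_Reymond_interior[OF H orth, of m y] that m by simp
  qed simp
  have "continuous_on (closure {a<..<b}) H" using H ab by simp
  from continuous_constant_on_closure[OF this const] have "H y = H m" if "y \<in> {a..b}" for y
    using that ab by simp
  then show ?thesis using x ab by simp
qed

lemma hk_primitive_unique:
  assumes ab: "a < b" and F: "hk_primitive a b f F" and G: "hk_primitive a b f G"
    and x: "x \<in> {a..b}"
  shows "F x = G x"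
proof -
  have cont: "continuous_on {a..b} F" "continuous_on {a..b} G"
    using F G by (auto simp: hk_primitive_def)
  have "integral {a..b} (\<lambda>x. (F x - G x) * deriv \<phi> x) = 0" if t: "test_fun a b \<phi>" for \<phi>
  proof -
    have "- integral {a..b} (\<lambda>x. F x * deriv \<phi> x) = f \<phi>"
      and "- integral {a..b} (\<lambda>x. G x * deriv \<phi> x) = f \<phi>"
      using F G t by (auto simp: hk_primitive_def distr_eq_def Dd_def regular_def)
    then have "integral {a..b} (\<lambda>x. F x * deriv \<phi> x) = integral {a..b} (\<lambda>x. G x * deriv \<phi> x)"
      by simp
    moreover have "(\<lambda>x. K x * deriv \<phi> x) integrable_on {a..b}" if "continuous_on {a..b} K" for K
      by (intro integrable_continuous_interval continuous_on_mult that
          test_fun_continuous_on[OF test_fun_deriv[OF t]])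
    ultimately show ?thesis
      using cont by (simp add: left_diff_distrib integral_diff)
  qed
  then have "F x - G x = F a - G a"
    using du_Bois_Reymond[OF ab continuous_on_diff[OF cont] _ x] by simp
  then show ?thesis using F G by (simp add: hk_primitive_def)
qed

lemma hk_prim_eq_primitive:
  assumes ab: "a < b" and F: "hk_primitive a b f F"
  shows "hk_primitive a b f (hk_prim a b f)"
    and "\<And>x. x \<in> {a..b} \<Longrightarrow> hk_prim a b f x = F x"
proof -
  define F0 where "F0 = (\<lambda>x. if x \<in> {a..b} then F x else 0)"
  have "regular a b F0 = regular a b F"
    unfolding regular_def F0_def by (intro ext integral_cong) auto
  moreover have "continuous_on {a..b} F0"
    using F continuous_on_eq[of "{a..b}" F F0] by (auto simp: hk_primitive_def F0_def)
  ultimately have F0: "hk_primitive a b f F0"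
    using F ab by (auto simp: hk_primitive_def F0_def)
  have "\<exists>!G. hk_primitive a b f G \<and> (\<forall>x. x \<notin> {a..b} \<longrightarrow> G x = 0)"
  proof (rule ex1I[of _ F0])
    show "hk_primitive a b f F0 \<and> (\<forall>x. x \<notin> {a..b} \<longrightarrow> F0 x = 0)"
      using F0 by (simp add: F0_def)
    show "G = F0" if "hk_primitive a b f G \<and> (\<forall>x. x \<notin> {a..b} \<longrightarrow> G x = 0)" for G
      using hk_primitive_unique[OF ab _ F0, of G] that by (auto simp: F0_def)
  qed
  then have "hk_primitive a b f (hk_prim a b f)"
    unfolding hk_prim_def by (rule theI'[THEN conjunct1])
  then show "hk_primitive a b f (hk_prim a b f)"
    and "\<And>x. x \<in> {a..b} \<Longrightarrow> hk_prim a b f x = F x"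
    using hk_primitive_unique[OF ab _ F] by auto
qed

section \<open>Fubini's theorem on a triangle\<close>

lemma sigma_finite_measure_lebesgue: "sigma_finite_measure (lebesgue :: real measure)"
  unfolding sigma_finite_measure_def
proof (intro exI[of _ "range (\<lambda>n::nat. {-real n..real n})"] conjI)
  have "\<exists>n::nat. x \<in> {-real n..real n}" for x :: real
  proof -
    obtain n :: nat where "\<bar>x\<bar> \<le> real n" using real_arch_simple by blast
    then show ?thesis by (intro exI[of _ n]) auto
  qed
  then show "\<Union> (range (\<lambda>n::nat. {-real n..real n})) = space lebesgue"
    by auto
qed auto

lemma pair_sigma_finite_lebesgue: "pair_sigma_finite (lebesgue :: real measure) (lebesgue :: real measure)"
  by (simp add: pair_sigma_finite_def sigma_finite_measure_lebesgue)

lemma measurable_fst_lebesgue [measurable]: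
  "fst \<in> borel_measurable (lebesgue \<Otimes>\<^sub>M (lebesgue :: real measure))"
  using measurable_compose[OF measurable_fst id_borel_measurable_lebesgue] by (simp add: id_def)

lemma measurable_snd_lebesgue [measurable]:
  "snd \<in> borel_measurable ((lebesgue :: real measure) \<Otimes>\<^sub>M lebesgue)"
  using measurable_compose[OF measurable_snd id_borel_measurable_lebesgue] by (simp add: id_def)

lemma iterated_integral_eq_integral_sections:
  fixes \<Psi> :: "real \<Rightarrow> real \<Rightarrow> real" and lo hi :: "real \<Rightarrow> real"
  assumes int: "integrable (lebesgue \<Otimes>\<^sub>M lebesgue)
    (\<lambda>(u,v). indicator {a..x} u * (indicator {lo u..hi u} v * \<Psi> u v))"
  shows "(\<integral>u. (\<integral>v. indicator {a..x} u * (indicator {lo u..hi u} v * \<Psi> u v) \<partial>lebesgue) \<partial>lebesgue)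
      = integral {a..x} (\<lambda>u. integral {lo u..hi u} (\<Psi> u))"
    and "(\<lambda>u. integral {lo u..hi u} (\<Psi> u)) absolutely_integrable_on {a..x}"
proof -
  interpret P: pair_sigma_finite "lebesgue :: real measure" "lebesgue :: real measure"
    by (rule pair_sigma_finite_lebesgue)
  define g where "g = (\<lambda>(u,v). indicator {a..x} u * (indicator {lo u..hi u} v * \<Psi> u v) :: real)"
  have int: "integrable (lebesgue \<Otimes>\<^sub>M lebesgue) g" using int by (simp add: g_def)
  define G where "G u = (\<integral>v. g (u,v) \<partial>lebesgue)" for u
  have "AE u in lebesgue. integrable lebesgue (\<lambda>v. g (u,v))"
    by (rule P.AE_integrable_fst'[OF int])
  then obtain N where N: "N \<in> null_sets lebesgue"
    and sect: "\<And>u. u \<notin> N \<Longrightarrow> integrable lebesgue (\<lambda>v. g (u,v))"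
    by (auto elim!: AE_E3)
  have G_eq: "G u = integral {lo u..hi u} (\<Psi> u)" if "u \<in> {a..x}" "u \<notin> N" for u
  proof -
    have eq: "(\<lambda>v. g (u,v)) = (\<lambda>v. indicator {lo u..hi u} v *\<^sub>R \<Psi> u v)"
      using that(1) by (auto simp: g_def fun_eq_iff)
    then have "set_integrable lebesgue {lo u..hi u} (\<Psi> u)"
      unfolding set_integrable_def using sect[OF that(2)] by simp
    from set_lebesgue_integral_eq_integral(2)[OF this] show ?thesis
      by (simp add: G_def eq set_lebesgue_integral_def)
  qed
  have "set_integrable lebesgue {a..x} G"
    unfolding set_integrable_def G_def
    by (rule integrable_mult_indicator[OF _ P.integrable_fst'[OF int]]) auto
  moreover have negN: "negligible N" using N by (simp add: negligible_iff_null_sets)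
  ultimately show "(\<lambda>u. integral {lo u..hi u} (\<Psi> u)) absolutely_integrable_on {a..x}"
    by (rule absolutely_integrable_spike) (auto simp: G_eq)
  have "(\<integral>u. G u \<partial>lebesgue) = (LINT u:{a..x}|lebesgue. G u)"
    unfolding set_lebesgue_integral_def
    by (intro Bochner_Integration.integral_cong) (auto simp: G_def g_def indicator_def)
  also have "\<dots> = integral {a..x} G"
    by (rule set_lebesgue_integral_eq_integral(2)[OF \<open>set_integrable lebesgue {a..x} G\<close>])
  also have "\<dots> = integral {a..x} (\<lambda>u. integral {lo u..hi u} (\<Psi> u))"
    by (rule integral_spike[OF negN]) (auto simp: G_eq)
  finally show "(\<integral>u. (\<integral>v. indicator {a..x} u * (indicator {lo u..hi u} v * \<Psi> u v) \<partial>lebesgue) \<partial>lebesgue)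
      = integral {a..x} (\<lambda>u. integral {lo u..hi u} (\<Psi> u))"
    by (simp add: G_def g_def)
qed

lemma lebesgue_integral_abs_indicator_mult:
  fixes g :: "real \<Rightarrow> real"
  assumes "g absolutely_integrable_on {t..x}"
  shows "(\<integral>s. \<bar>c * (indicator {t..x} s * g s)\<bar> \<partial>lebesgue) = \<bar>c\<bar> * integral {t..x} (\<lambda>s. \<bar>g s\<bar>)"
proof -
  have "(\<integral>s. \<bar>c * (indicator {t..x} s * g s)\<bar> \<partial>lebesgue) = \<bar>c\<bar> * (LINT s:{t..x}|lebesgue. \<bar>g s\<bar>)"
    unfolding set_lebesgue_integral_def
    by (subst integral_mult_right_zero[symmetric])
       (auto simp: abs_mult indicator_def intro!: Bochner_Integration.integral_cong)
  also have "(LINT s:{t..x}|lebesgue. \<bar>g s\<bar>) = integral {t..x} (\<lambda>s. \<bar>g s\<bar>)"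
    using set_lebesgue_integral_eq_integral(2)[OF absolutely_integrable_norm[OF assms]]
    by (simp add: o_def)
  finally show ?thesis .
qed

lemma integrable_triangle:
  fixes k :: "real \<Rightarrow> real \<Rightarrow> real" and h :: "real \<Rightarrow> real"
  assumes km: "(\<lambda>(t,s). k t s) \<in> borel_measurable (lebesgue \<Otimes>\<^sub>M lebesgue)"
    and h: "h absolutely_integrable_on {a..x}"
    and k: "\<And>t. t \<in> {a..x} \<Longrightarrow> k t absolutely_integrable_on {t..x}"
    and k_bound: "\<And>t. t \<in> {a..x} \<Longrightarrow> integral {t..x} (\<lambda>s. \<bar>k t s\<bar>) \<le> C"
  shows "integrable (lebesgue \<Otimes>\<^sub>M lebesgue)
    (\<lambda>(t,s). indicator {a..x} t * (indicator {t..x} s * (k t s * h t)))"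
proof -
  interpret P: pair_sigma_finite "lebesgue :: real measure" "lebesgue :: real measure"
    by (rule pair_sigma_finite_lebesgue)
  define H where "H t = indicator {a..x} t * h t" for t
  have H: "integrable lebesgue H" using h by (simp add: set_integrable_def H_def[abs_def])
  define Fn where "Fn = (\<lambda>(t,s). H t * (indicator {t..x} s * k t s) :: real)"
  have "(\<lambda>(t,s). indicator {t..x} s :: real) = (\<lambda>p. if fst p \<le> snd p \<and> snd p \<le> x then 1 else 0)"
    by (auto simp: fun_eq_iff)
  then have "(\<lambda>(t,s). indicator {t..x} s :: real) \<in> borel_measurable (lebesgue \<Otimes>\<^sub>M lebesgue)"
    by simp
  then have meas: "Fn \<in> borel_measurable (lebesgue \<Otimes>\<^sub>M lebesgue)"
    unfolding Fn_def split_beta'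
    using km H by (intro borel_measurable_times) (auto simp: split_beta')
  have bound: "norm (\<integral>s. norm (Fn (t,s)) \<partial>lebesgue) \<le> norm (C * \<bar>H t\<bar>)" for t
  proof (cases "t \<in> {a..x}")
    case True
    have "(\<integral>s. norm (Fn (t,s)) \<partial>lebesgue) = \<bar>H t\<bar> * integral {t..x} (\<lambda>s. \<bar>k t s\<bar>)"
      unfolding Fn_def by (simp add: lebesgue_integral_abs_indicator_mult[OF k[OF True]])
    also have "\<dots> \<le> \<bar>H t\<bar> * C"
      using k_bound[OF True] by (intro mult_left_mono) auto
    also have "\<dots> \<le> \<bar>H t\<bar> * \<bar>C\<bar>"
      by (simp add: mult_left_mono)
    finally show ?thesis by (simp add: abs_mult mult.commute)
  qed (simp add: Fn_def H_def)
  have "integrable (lebesgue \<Otimes>\<^sub>M lebesgue) Fn"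
  proof (rule P.Fubini_integrable[OF meas])
    have "(\<lambda>p. norm (Fn p)) \<in> borel_measurable (lebesgue \<Otimes>\<^sub>M lebesgue)"
      using meas by measurable
    then have m: "(\<lambda>t. \<integral>s. norm (Fn (t,s)) \<partial>lebesgue) \<in> borel_measurable lebesgue"
      by (intro sigma_finite_measure.borel_measurable_lebesgue_integral[OF sigma_finite_measure_lebesgue])
         simp
    show "integrable lebesgue (\<lambda>t. \<integral>s. norm (Fn (t,s)) \<partial>lebesgue)"
      by (rule Bochner_Integration.integrable_bound[of _ "\<lambda>t. C * \<bar>H t\<bar>", OF _ m])
         (use H bound in auto)
    have "integrable lebesgue (\<lambda>s. Fn (t,s))" for t
      using k[of t] by (cases "t \<in> {a..x}") (auto simp: Fn_def H_def set_integrable_def)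
    then show "AE t in lebesgue. integrable lebesgue (\<lambda>s. Fn (t,s))" by simp
  qed
  then show ?thesis by (simp add: Fn_def H_def split_beta' mult_ac)
qed

lemma integral_triangle_swap:
  fixes k :: "real \<Rightarrow> real \<Rightarrow> real" and h :: "real \<Rightarrow> real"
  assumes "(\<lambda>(t,s). k t s) \<in> borel_measurable (lebesgue \<Otimes>\<^sub>M lebesgue)"
    and "h absolutely_integrable_on {a..x}"
    and "\<And>t. t \<in> {a..x} \<Longrightarrow> k t absolutely_integrable_on {t..x}"
    and "\<And>t. t \<in> {a..x} \<Longrightarrow> integral {t..x} (\<lambda>s. \<bar>k t s\<bar>) \<le> C"
  shows "integral {a..x} (\<lambda>s. integral {a..s} (\<lambda>t. k t s * h t))
      = integral {a..x} (\<lambda>t. integral {t..x} (\<lambda>s. k t s * h t))"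
    and "(\<lambda>s. integral {a..s} (\<lambda>t. k t s * h t)) absolutely_integrable_on {a..x}"
proof -
  interpret P: pair_sigma_finite "lebesgue :: real measure" "lebesgue :: real measure"
    by (rule pair_sigma_finite_lebesgue)
  note int = integrable_triangle[OF assms]
  have swap: "(\<lambda>(t,s). indicator {a..x} t * (indicator {t..x} s * (k t s * h t)))
      = (\<lambda>(t,s). indicator {a..x} s * (indicator {a..s} t * (k t s * h t)) :: real)"
    by (auto simp: fun_eq_iff indicator_def)
  have int': "integrable (lebesgue \<Otimes>\<^sub>M lebesgue)
      (\<lambda>(s,t). indicator {a..x} s * (indicator {a..s} t * (k t s * h t)))"
    using P.integrable_product_swap[OF int] by (simp add: swap case_prod_beta')
  note by_t = iterated_integral_eq_integral_sections[where lo="\<lambda>u. u" and hi="\<lambda>u. x" and \<Psi>="\<lambda>u v. k u v * h u", OF int]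
  note by_s = iterated_integral_eq_integral_sections[where lo="\<lambda>u. a" and hi="\<lambda>u. u" and \<Psi>="\<lambda>u v. k v u * h v", OF int']
  show "(\<lambda>s. integral {a..s} (\<lambda>t. k t s * h t)) absolutely_integrable_on {a..x}"
    using by_s(2) by simp
  have pointwise: "indicator {a..x} t * (indicator {t..x} s * (k t s * h t))
      = indicator {a..x} s * (indicator {a..s} t * (k t s * h t) :: real)" for s t
    by (auto simp: indicator_def)
  have "(\<integral>s. (\<integral>t. indicator {a..x} t * (indicator {t..x} s * (k t s * h t)) \<partial>lebesgue) \<partial>lebesgue)
      = (\<integral>t. (\<integral>s. indicator {a..x} t * (indicator {t..x} s * (k t s * h t)) \<partial>lebesgue) \<partial>lebesgue)"
    using P.Fubini_integral[of "\<lambda>t s. indicator {a..x} t * (indicator {t..x} s * (k t s * h t))"] int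
    by simp
  then show "integral {a..x} (\<lambda>s. integral {a..s} (\<lambda>t. k t s * h t))
      = integral {a..x} (\<lambda>t. integral {t..x} (\<lambda>s. k t s * h t))"
    using by_t(1) by_s(1) by (simp only: pointwise)
qed

section \<open>Integration by parts against primitives of integrable functions\<close>

lemma integral_eq_diff_of_deriv:
  assumes "\<And>y. (p has_real_derivative q y) (at y)" and "a \<le> x"
  shows "integral {a..x} q = p x - p a"
proof -
  have "(q has_integral (p x - p a)) {a..x}"
    using assms(2) by (intro fundamental_theorem_of_calculus)
      (auto intro!: DERIV_subset[OF assms(1)] simp: has_real_derivative_iff_has_vector_derivative[symmetric])
  then show ?thesis by (rule integral_unique)
qed

lemma integral_primitive_mult_deriv:
  fixes u \<psi> \<psi>' :: "real \<Rightarrow> real"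
  assumes ab: "a \<le> b" and u: "u absolutely_integrable_on {a..b}"
    and \<psi>: "\<And>y. (\<psi> has_real_derivative \<psi>' y) (at y)" and \<psi>': "continuous_on UNIV \<psi>'"
    and \<psi>_b: "\<psi> b = 0"
  shows "integral {a..b} (\<lambda>y. integral {a..y} u * \<psi>' y) = - integral {a..b} (\<lambda>s. u s * \<psi> s)"
proof -
  have "bounded (\<psi>' ` {a..b})"
    by (intro compact_imp_bounded compact_continuous_image continuous_on_subset[OF \<psi>']) auto
  then obtain M where M: "\<forall>y\<in>{a..b}. \<bar>\<psi>' y\<bar> \<le> M" by (auto simp: bounded_real)
  have "(\<lambda>p::real \<times> real. \<psi>' (snd p)) \<in> borel_measurable (lebesgue \<Otimes>\<^sub>M lebesgue)"
    by (rule measurable_compose[OF measurable_snd_lebesgue borel_measurable_continuous_onI[OF \<psi>']])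
  then have meas: "(\<lambda>(t::real, s). \<psi>' s) \<in> borel_measurable (lebesgue \<Otimes>\<^sub>M lebesgue)"
    by (simp add: case_prod_beta')
  have bound: "integral {t..b} (\<lambda>s. \<bar>\<psi>' s\<bar>) \<le> M * (b - a)" if "t \<in> {a..b}" for t
  proof -
    have "integral {t..b} (\<lambda>s. \<bar>\<psi>' s\<bar>) \<le> integral {t..b} (\<lambda>s. M)"
      using M that by (intro integral_le integrable_continuous_interval continuous_intros
          continuous_on_subset[OF \<psi>']) auto
    also have "\<dots> \<le> M * (b - a)"
    proof -
      have "0 \<le> M" using M ab by force
      then show ?thesis using that by (simp add: mult.commute mult_left_mono)
    qed
    finally show ?thesis .
  qed
  have "integral {a..b} (\<lambda>y. integral {a..y} u * \<psi>' y) = integral {a..b} (\<lambda>s. integral {a..s} (\<lambda>t. \<psi>' s * u t))"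
    by (simp add: mult.commute)
  also have "\<dots> = integral {a..b} (\<lambda>t. integral {t..b} (\<lambda>s. \<psi>' s * u t))"
    by (rule integral_triangle_swap(1)[where k="\<lambda>t s. \<psi>' s", OF meas u _ bound])
       (auto intro!: absolutely_integrable_continuous_real continuous_on_subset[OF \<psi>'])
  also have "\<dots> = integral {a..b} (\<lambda>t. - (u t * \<psi> t))"
    using integral_eq_diff_of_deriv[OF \<psi>] \<psi>_b by (intro integral_cong) auto
  finally show ?thesis by simp
qed

lemma Dd_regular_primitive:
  assumes "a \<le> b" and "u absolutely_integrable_on {a..b}" and "test_fun a b \<phi>"
  shows "Dd (regular a b (\<lambda>x. integral {a..x} u)) \<phi> = regular a b u \<phi>"
  using integral_primitive_mult_deriv[OF assms(1,2) test_fun_has_real_derivative[OF assms(3)]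
      test_fun_continuous_on[OF test_fun_deriv[OF assms(3)]]]
    test_fun_vanishes_at_ends[OF assms(3)]
  by (simp add: Dd_def regular_def)

lemma hk_primitive_regular:
  assumes "a < b" and u: "u absolutely_integrable_on {a..b}"
  shows "hk_primitive a b (regular a b u) (\<lambda>x. integral {a..x} u)"
  unfolding hk_primitive_def distr_eq_def
  using assms Dd_regular_primitive[OF _ u] set_lebesgue_integral_eq_integral(1)[OF u]
  by (auto intro: indefinite_integral_continuous_1)

section \<open>The Riemann-Liouville integral of integrable functions\<close>

lemma Gamma_plus1_pos: "z > 0 \<Longrightarrow> Gamma (z + 1) = z * Gamma (z::real)"
  by (rule Gamma_plus1) (auto dest: nonpos_Ints_nonpos)

lemma has_integral_powr_diff_left:
  fixes \<alpha> t x :: real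
  assumes "\<alpha> > 0" "t \<le> x"
  shows "((\<lambda>s. (s - t) powr (\<alpha> - 1)) has_integral (x - t) powr \<alpha> / \<alpha>) {t..x}"
proof -
  define F where "F s = (s - t) powr \<alpha> / \<alpha>" for s
  have "((\<lambda>s. (s - t) powr (\<alpha> - 1)) has_integral (F x - F t)) {t..x}"
  proof (rule fundamental_theorem_of_calculus_interior[OF assms(2)])
    show "continuous_on {t..x} F"
      unfolding F_def using assms by (intro continuous_on_divide continuous_on_powr' continuous_intros) auto
    fix s assume "s \<in> {t<..<x}"
    then have "(F has_real_derivative (\<alpha> * (s - t) powr (\<alpha> - 1) * 1) / \<alpha>) (at s)"
      unfolding F_def using assms(1) by (intro derivative_eq_intros) auto
    then show "(F has_vector_derivative (s - t) powr (\<alpha> - 1)) (at s)"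
      using assms by (simp add: has_real_derivative_iff_has_vector_derivative[symmetric])
  qed
  then show ?thesis using assms by (simp add: F_def)
qed

lemma has_integral_powr_diff_right:
  fixes \<alpha> t x :: real
  assumes "\<alpha> > 0" "t \<le> x"
  shows "((\<lambda>s. (x - s) powr (\<alpha> - 1)) has_integral (x - t) powr \<alpha> / \<alpha>) {t..x}"
proof -
  define F where "F s = - ((x - s) powr \<alpha> / \<alpha>)" for s
  have "((\<lambda>s. (x - s) powr (\<alpha> - 1)) has_integral (F x - F t)) {t..x}"
  proof (rule fundamental_theorem_of_calculus_interior[OF assms(2)])
    show "continuous_on {t..x} F"
      unfolding F_def using assms
      by (intro continuous_on_minus continuous_on_divide continuous_on_powr' continuous_intros) auto
    fix s assume "s \<in> {t<..<x}"
    then have "(F has_real_derivative - ((\<alpha> * (x - s) powr (\<alpha> - 1) * (0 - 1)) / \<alpha>)) (at s)"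
      unfolding F_def using assms(1) by (intro derivative_eq_intros) auto
    then show "(F has_vector_derivative (x - s) powr (\<alpha> - 1)) (at s)"
      using assms by (simp add: has_real_derivative_iff_has_vector_derivative[symmetric])
  qed
  then show ?thesis using assms by (simp add: F_def)
qed

lemma integral_triangle_swap_kernel:
  fixes k :: "real \<Rightarrow> real \<Rightarrow> real" and h K :: "real \<Rightarrow> real"
  assumes meas: "(\<lambda>(t,s). k t s) \<in> borel_measurable (lebesgue \<Otimes>\<^sub>M lebesgue)"
    and h: "h absolutely_integrable_on {a..x}"
    and K: "\<And>t. t \<in> {a..x} \<Longrightarrow> (k t has_integral K t) {t..x}"
    and k_nonneg: "\<And>t s. t \<in> {a..x} \<Longrightarrow> s \<in> {t..x} \<Longrightarrow> k t s \<ge> 0"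
    and K_bound: "\<And>t. t \<in> {a..x} \<Longrightarrow> K t \<le> C"
  shows "integral {a..x} (\<lambda>s. integral {a..s} (\<lambda>t. k t s * h t)) = integral {a..x} (\<lambda>t. K t * h t)"
    and "(\<lambda>s. integral {a..s} (\<lambda>t. k t s * h t)) absolutely_integrable_on {a..x}"
proof -
  have k: "k t absolutely_integrable_on {t..x}" if "t \<in> {a..x}" for t
    using K[OF that] k_nonneg[OF that]
    by (intro nonnegative_absolutely_integrable_1) (auto simp: integrable_on_def)
  have "integral {t..x} (\<lambda>s. \<bar>k t s\<bar>) = integral {t..x} (k t)" if "t \<in> {a..x}" for t
    using k_nonneg[OF that] by (intro integral_cong) auto
  then have "integral {t..x} (\<lambda>s. \<bar>k t s\<bar>) \<le> C" if "t \<in> {a..x}" for t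
    using K_bound[OF that] integral_unique[OF K[OF that]] that by simp
  note swap = integral_triangle_swap[OF meas h k this]
  show "(\<lambda>s. integral {a..s} (\<lambda>t. k t s * h t)) absolutely_integrable_on {a..x}"
    by (rule swap(2))
  have "integral {a..x} (\<lambda>t. integral {t..x} (\<lambda>s. k t s * h t)) = integral {a..x} (\<lambda>t. K t * h t)"
    using integral_unique[OF K] by (intro integral_cong) simp
  with swap(1) show "integral {a..x} (\<lambda>s. integral {a..s} (\<lambda>t. k t s * h t)) = integral {a..x} (\<lambda>t. K t * h t)"
    by simp
qed

lemma powr_diff_le_powr_diff:
  fixes \<alpha> :: real
  shows "\<alpha> > 0 \<Longrightarrow> t \<in> {a..x} \<Longrightarrow> (x - t) powr \<alpha> / \<alpha> \<le> (x - a) powr \<alpha> / \<alpha>"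
  by (intro divide_right_mono powr_mono2) auto

lemma rl_L1_integral:
  assumes \<alpha>: "\<alpha> > 0" and h: "h absolutely_integrable_on {a..x}"
  shows "integral {a..x} (rl_L1 a \<alpha> h) = rl_L1 a (\<alpha> + 1) h x"
    and "rl_L1 a \<alpha> h absolutely_integrable_on {a..x}"
proof -
  have "(\<lambda>(t,s). (s - t) powr (\<alpha> - 1)) \<in> borel_measurable (lebesgue \<Otimes>\<^sub>M (lebesgue :: real measure))"
    by (simp add: case_prod_beta')
  note swap = integral_triangle_swap_kernel[OF this h has_integral_powr_diff_left[OF \<alpha>]
      _ powr_diff_le_powr_diff[where a=a and x=x, OF \<alpha>]]
  show "integral {a..x} (rl_L1 a \<alpha> h) = rl_L1 a (\<alpha> + 1) h x"
    using swap(1) by (simp add: rl_L1_def[abs_def] Gamma_plus1_pos[OF \<alpha>])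
  show "rl_L1 a \<alpha> h absolutely_integrable_on {a..x}"
    using swap(2) by (simp add: rl_L1_def[abs_def])
qed

lemma rl_L1_primitive:
  assumes \<alpha>: "\<alpha> > 0" and h: "h absolutely_integrable_on {a..x}"
  shows "rl_L1 a \<alpha> (\<lambda>s. integral {a..s} h) x = rl_L1 a (\<alpha> + 1) h x"
proof -
  have "(\<lambda>(t::real, s). (x - s) powr (\<alpha> - 1)) \<in> borel_measurable (lebesgue \<Otimes>\<^sub>M lebesgue)"
    by (simp add: case_prod_beta')
  note swap = integral_triangle_swap_kernel[OF this h has_integral_powr_diff_right[OF \<alpha>]
      _ powr_diff_le_powr_diff[where a=a and x=x, OF \<alpha>]]
  then show ?thesis
    by (simp add: rl_L1_def Gamma_plus1_pos[OF \<alpha>])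
qed

lemma rl_L1_1: "rl_L1 a 1 h = (\<lambda>x. integral {a..x} h)"
proof
  fix x
  \<comment> \<open>\<open>(x - t) powr 0\<close> is \<open>1\<close> except at \<open>t = x\<close>, where \<open>0 powr 0 = 0\<close>.\<close>
  have "integral {a..x} (\<lambda>t. (x - t) powr 0 * h t) = integral {a..x} h"
    by (rule integral_spike[of "{x}"]) auto
  then show "rl_L1 a 1 h x = integral {a..x} h" by (simp add: rl_L1_def)
qed

lemma rl_L1_left [simp]: "rl_L1 a \<alpha> h a = 0"
  by (simp add: rl_L1_def)

lemma rl_L1_cong:
  assumes "\<And>t. t \<in> {a..x} \<Longrightarrow> g t = h t"
  shows "rl_L1 a \<alpha> g x = rl_L1 a \<alpha> h x"
proof -
  have "integral {a..x} (\<lambda>t. (x - t) powr (\<alpha> - 1) * g t) = integral {a..x} (\<lambda>t. (x - t) powr (\<alpha> - 1) * h t)"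
    using assms by (intro integral_cong) simp
  then show ?thesis by (simp add: rl_L1_def)
qed

lemma absolutely_integrable_powr_kernel_mult:
  fixes g :: "real \<Rightarrow> real"
  assumes "\<alpha> > 0" "a \<le> x" and g: "continuous_on {a..x} g"
  shows "(\<lambda>t. (x - t) powr (\<alpha> - 1) * g t) absolutely_integrable_on {a..x}"
proof -
  have "(\<lambda>t. (x - t) powr (\<alpha> - 1)) absolutely_integrable_on {a..x}"
    using has_integral_powr_diff_right[OF assms(1,2)]
    by (intro nonnegative_absolutely_integrable_1) (auto simp: integrable_on_def)
  moreover have "bounded (g ` {a..x})"
    by (intro compact_imp_bounded compact_continuous_image g) auto
  ultimately have "(\<lambda>t. g t * (x - t) powr (\<alpha> - 1)) absolutely_integrable_on {a..x}"
    using absolutely_integrable_bounded_measurable_product_real[OF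
        continuous_imp_measurable_on_sets_lebesgue[OF g]]
    by auto
  then show ?thesis by (simp add: mult.commute)
qed

lemma rl_L1_add_diff:
  fixes g h :: "real \<Rightarrow> real"
  assumes "\<alpha> > 0" "a \<le> x" "continuous_on {a..x} g" "continuous_on {a..x} h"
  shows "rl_L1 a \<alpha> (\<lambda>t. g t + h t) x = rl_L1 a \<alpha> g x + rl_L1 a \<alpha> h x"
    and "rl_L1 a \<alpha> (\<lambda>t. g t - h t) x = rl_L1 a \<alpha> g x - rl_L1 a \<alpha> h x"
proof -
  have "(\<lambda>t. (x - t) powr (\<alpha> - 1) * g t) integrable_on {a..x}"
    and "(\<lambda>t. (x - t) powr (\<alpha> - 1) * h t) integrable_on {a..x}"
    using absolutely_integrable_powr_kernel_mult[OF assms(1,2)] assms(3,4)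
    by (auto intro: set_lebesgue_integral_eq_integral(1))
  then show "rl_L1 a \<alpha> (\<lambda>t. g t + h t) x = rl_L1 a \<alpha> g x + rl_L1 a \<alpha> h x"
    and "rl_L1 a \<alpha> (\<lambda>t. g t - h t) x = rl_L1 a \<alpha> g x - rl_L1 a \<alpha> h x"
    by (simp_all add: rl_L1_def integral_add integral_diff algebra_simps)
qed

lemma rl_L1_const:
  assumes "\<alpha> > 0" "a \<le> x"
  shows "rl_L1 a \<alpha> (\<lambda>t. c) x = c * (x - a) powr \<alpha> / Gamma (\<alpha> + 1)"
  using integral_unique[OF has_integral_powr_diff_right[OF assms]] assms
  by (simp add: rl_L1_def Gamma_plus1_pos mult_ac)

lemma abs_rl_L1_le:
  fixes g :: "real \<Rightarrow> real"
  assumes \<alpha>: "\<alpha> > 0" and x: "x \<in> {a..b}" and g: "continuous_on {a..b} g"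
    and M: "\<forall>t\<in>{a..b}. \<bar>g t\<bar> \<le> M"
  shows "\<bar>rl_L1 a \<alpha> g x\<bar> \<le> M * ((b - a) powr \<alpha> / Gamma (\<alpha> + 1))"
proof -
  have ax: "a \<le> x" using x by simp
  have M0: "0 \<le> M" using M x by force
  have "norm (integral {a..x} (\<lambda>t. (x - t) powr (\<alpha> - 1) * g t))
      \<le> integral {a..x} (\<lambda>t. M * (x - t) powr (\<alpha> - 1))"
  proof (rule integral_norm_bound_integral)
    show "(\<lambda>t. (x - t) powr (\<alpha> - 1) * g t) integrable_on {a..x}"
      using absolutely_integrable_powr_kernel_mult[OF \<alpha> ax continuous_on_subset[OF g]] x
      by (auto intro: set_lebesgue_integral_eq_integral(1))
    show "(\<lambda>t. M * (x - t) powr (\<alpha> - 1)) integrable_on {a..x}"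
      using has_integral_powr_diff_right[OF \<alpha> ax]
      by (intro integrable_on_mult_right) (auto simp: integrable_on_def)
    fix t assume "t \<in> {a..x}"
    then have "\<bar>g t\<bar> \<le> M" using M x by auto
    then show "norm ((x - t) powr (\<alpha> - 1) * g t) \<le> M * (x - t) powr (\<alpha> - 1)"
      by (simp add: abs_mult mult.commute mult_right_mono)
  qed
  also have "\<dots> = M * ((x - a) powr \<alpha> / \<alpha>)"
    using integral_unique[OF has_integral_powr_diff_right[OF \<alpha> ax]] by simp
  also have "\<dots> \<le> M * ((b - a) powr \<alpha> / \<alpha>)"
    using M0 powr_diff_le_powr_diff[OF \<alpha>, of a a b] x \<alpha>
    by (intro mult_left_mono divide_right_mono powr_mono2) auto
  finally have "\<bar>integral {a..x} (\<lambda>t. (x - t) powr (\<alpha> - 1) * g t)\<bar> / Gamma \<alpha>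
      \<le> M * ((b - a) powr \<alpha> / \<alpha>) / Gamma \<alpha>"
    using \<alpha> by (intro divide_right_mono) auto
  then show ?thesis
    using Gamma_real_pos[OF \<alpha>] by (simp add: rl_L1_def abs_mult Gamma_plus1_pos[OF \<alpha>])
qed

lemma C1_approximation:
  fixes Q :: "real \<Rightarrow> real"
  assumes "continuous_on {a..b} Q"
  obtains p q where "\<And>k x. (p k has_real_derivative q k x) (at x)"
    and "\<And>k. continuous_on UNIV (q k)"
    and "\<And>k x. x \<in> {a..b} \<Longrightarrow> \<bar>Q x - p k x\<bar> \<le> 1 / Suc k"
proof -
  have "\<exists>g g'. (\<forall>x. (g has_real_derivative g' x) (at x)) \<and> continuous_on UNIV g'
      \<and> (\<forall>x\<in>{a..b}. \<bar>Q x - g x\<bar> \<le> 1 / Suc k)" for k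
  proof -
    obtain g where g: "polynomial_function g" "\<forall>x\<in>{a..b}. norm (Q x - g x) < 1 / Suc k"
      using Stone_Weierstrass_polynomial_function[OF compact_Icc assms, of "1 / Suc k"] by auto
    then have "real_polynomial_function g" by (simp add: real_polynomial_function_eq)
    then obtain g' where g': "real_polynomial_function g'" "\<And>x. (g has_real_derivative g' x) (at x)"
      using has_real_derivative_polynomial_function by blast
    have "continuous_on UNIV g'"
      using g'(1) by (intro continuous_on_polymonial_function) (simp add: real_polynomial_function_eq)
    then show ?thesis using g g' by (intro exI[of _ g] exI[of _ g']) (auto simp: less_imp_le)
  qed
  then show ?thesis using that by metis
qed

lemma continuous_on_rl_L1_C1:
  assumes \<alpha>: "\<alpha> > 0" and p: "\<And>x. (p has_real_derivative q x) (at x)" and q: "continuous_on UNIV q"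
  shows "continuous_on {a..b} (rl_L1 a \<alpha> p)"
proof -
  have q_int: "q absolutely_integrable_on {a..x}" for x
    by (intro absolutely_integrable_continuous_real continuous_on_subset[OF q]) auto
  have eq: "rl_L1 a \<alpha> p x = p a * (x - a) powr \<alpha> / Gamma (\<alpha> + 1) + integral {a..x} (rl_L1 a \<alpha> q)"
    if "x \<in> {a..b}" for x
  proof -
    have ax: "a \<le> x" using that by simp
    have "rl_L1 a \<alpha> p x = rl_L1 a \<alpha> (\<lambda>t. p a + integral {a..t} q) x"
      using integral_eq_diff_of_deriv[OF p] by (intro rl_L1_cong) auto
    also have "\<dots> = rl_L1 a \<alpha> (\<lambda>t. p a) x + rl_L1 a \<alpha> (\<lambda>t. integral {a..t} q) x"
      using q_int ax
      by (intro rl_L1_add_diff(1)[OF \<alpha> ax] continuous_on_const indefinite_integral_continuous_1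
          set_lebesgue_integral_eq_integral(1))
    also have "\<dots> = p a * (x - a) powr \<alpha> / Gamma (\<alpha> + 1) + integral {a..x} (rl_L1 a \<alpha> q)"
      by (simp add: rl_L1_const[OF \<alpha> ax] rl_L1_primitive[OF \<alpha> q_int] rl_L1_integral(1)[OF \<alpha> q_int])
    finally show ?thesis .
  qed
  have "continuous_on {a..b} (\<lambda>x. (x - a) powr \<alpha>)"
    using \<alpha> by (intro continuous_on_powr' continuous_intros) auto
  moreover have "continuous_on {a..b} (\<lambda>x. integral {a..x} (rl_L1 a \<alpha> q))"
    using rl_L1_integral(2)[OF \<alpha> q_int]
    by (intro indefinite_integral_continuous_1 set_lebesgue_integral_eq_integral(1))
  ultimately have "continuous_on {a..b}
      (\<lambda>x. p a * (x - a) powr \<alpha> / Gamma (\<alpha> + 1) + integral {a..x} (rl_L1 a \<alpha> q))"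
    using Gamma_real_pos[of "\<alpha> + 1"] \<alpha>
    by (intro continuous_on_add continuous_on_divide continuous_on_mult continuous_on_const) fastforce+
  then show ?thesis by (rule continuous_on_eq) (simp add: eq)
qed

lemma continuous_on_rl_L1:
  fixes Q :: "real \<Rightarrow> real"
  assumes \<alpha>: "\<alpha> > 0" and Q: "continuous_on {a..b} Q"
  shows "continuous_on {a..b} (rl_L1 a \<alpha> Q)"
proof -
  \<comment> \<open>\<open>J\<^sup>\<alpha>\<close> is bounded in the sup norm, so it suffices to approximate \<open>Q\<close> uniformly by \<open>C\<^sup>1\<close> functions.\<close>
  obtain p q where p: "\<And>k x. (p k has_real_derivative q k x) (at x)"
    and q: "\<And>k. continuous_on UNIV (q k)" and pQ: "\<And>k x. x \<in> {a..b} \<Longrightarrow> \<bar>Q x - p k x\<bar> \<le> 1 / Suc k"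
    using C1_approximation[OF Q] by metis
  have p_cont: "continuous_on S (p k)" for k S
    using p by (intro continuous_at_imp_continuous_on ballI DERIV_isCont) blast
  define C where "C = (b - a) powr \<alpha> / Gamma (\<alpha> + 1)"
  have dist: "dist (rl_L1 a \<alpha> (p k) x) (rl_L1 a \<alpha> Q x) \<le> C / Suc k" if x: "x \<in> {a..b}" for k x
  proof -
    have "rl_L1 a \<alpha> Q x - rl_L1 a \<alpha> (p k) x = rl_L1 a \<alpha> (\<lambda>t. Q t - p k t) x"
      using x by (intro rl_L1_add_diff(2)[symmetric] \<alpha> continuous_on_subset[OF Q] p_cont) auto
    also have "\<bar>\<dots>\<bar> \<le> 1 / Suc k * C"
      unfolding C_def using x pQ by (intro abs_rl_L1_le[OF \<alpha>] continuous_on_diff Q p_cont) auto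
    finally show ?thesis by (simp add: dist_real_def abs_minus_commute)
  qed
  have "uniform_limit {a..b} (\<lambda>k. rl_L1 a \<alpha> (p k)) (rl_L1 a \<alpha> Q) sequentially"
  proof (rule uniform_limitI)
    fix e :: real assume "e > 0"
    moreover have "(\<lambda>k. C / real (Suc k)) \<longlonglongrightarrow> 0"
      by (rule LIMSEQ_Suc[OF lim_const_over_n])
    ultimately have "\<forall>\<^sub>F k in sequentially. C / real (Suc k) < e"
      by (simp add: order_tendstoD(2))
    then show "\<forall>\<^sub>F k in sequentially. \<forall>x\<in>{a..b}. dist (rl_L1 a \<alpha> (p k) x) (rl_L1 a \<alpha> Q x) < e"
      by (rule eventually_mono) (blast intro: le_less_trans[OF dist])
  qed
  then show ?thesis
    using continuous_on_rl_L1_C1[OF \<alpha> p q] by (intro uniform_limit_theorem) auto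
qed

section \<open>The Riemann-Liouville integral on the Henstock-Kurzweil integrable distributions\<close>

lemma regular_cong: "(\<And>x. x \<in> {a..b} \<Longrightarrow> F x = G x) \<Longrightarrow> regular a b F = regular a b G"
  unfolding regular_def by (intro ext integral_cong) auto

lemma hk_primitive_absolutely_integrable:
  "hk_primitive a b f F \<Longrightarrow> F absolutely_integrable_on {a..b}"
  by (simp add: hk_primitive_def absolutely_integrable_continuous_real)

lemma rl_hk_1:
  assumes "a < b" and Q: "hk_primitive a b g Q" and x: "x \<in> {a..b}"
  shows "rl_hk a b 1 g x = Q x"
  using hk_prim_eq_primitive[OF assms(1) Q] x
  by (simp add: rl_hk_def hk_int_ac_def kern_def kern'_def hk_primitive_def)

lemma rl_hk_eq_rl_L1:
  assumes ab: "a < b" and Q: "hk_primitive a b g Q" and n: "n > 1" and x: "x \<in> {a..b}"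
  shows "rl_hk a b n g x = rl_L1 a (n - 1) Q x"
proof -
  define I where "I = integral {a..x} (\<lambda>t. (x - t) powr (n - 1 - 1) * Q t)"
  have "integral {a..x} (\<lambda>t. hk_prim a b g t * kern' n x t)
      = integral {a..x} (\<lambda>t. - ((n - 1) * ((x - t) powr (n - 1 - 1) * Q t)))"
    using hk_prim_eq_primitive(2)[OF ab Q] x n by (intro integral_cong) (auto simp: kern'_def algebra_simps)
  also have "\<dots> = - ((n - 1) * I)"
    by (simp add: I_def)
  finally have "hk_int_ac (hk_prim a b g) (kern n x) (kern' n x) a x = (n - 1) * I"
    using hk_prim_eq_primitive(1)[OF ab Q] n by (simp add: hk_int_ac_def kern_def hk_primitive_def)
  then have "rl_hk a b n g x = 1 / Gamma n * ((n - 1) * I)"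
    by (simp add: rl_hk_def)
  also have "\<dots> = I / Gamma (n - 1)"
    using Gamma_plus1_pos[of "n - 1"] n by simp
  finally show ?thesis by (simp add: rl_L1_def I_def)
qed

lemma abs_le_alex:
  assumes "continuous_on {a..b} F" "x \<in> {a..b}"
  shows "\<bar>F x\<bar> \<le> alex a b F"
proof -
  have "bounded (F ` {a..b})"
    by (intro compact_imp_bounded compact_continuous_image assms(1)) auto
  then obtain M where "\<forall>y\<in>{a..b}. \<bar>F y\<bar> \<le> M" by (auto simp: bounded_real)
  then show ?thesis
    unfolding alex_def using assms(2) by (intro cSUP_upper bdd_aboveI2[of _ _ M]) auto
qed

lemma alex_tendsto_0:
  assumes "a \<le> b" and bound: "\<And>k x. x \<in> {a..b} \<Longrightarrow> \<bar>F k x\<bar> \<le> B k" and "B \<longlonglongrightarrow> 0"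
  shows "(\<lambda>k. alex a b (F k)) \<longlonglongrightarrow> 0"
proof (rule tendsto_sandwich[of "\<lambda>k. 0" _ _ B])
  have bdd: "bdd_above ((\<lambda>x. \<bar>F k x\<bar>) ` {a..b})" for k
    using bound by (intro bdd_aboveI2) auto
  have "\<bar>F k a\<bar> \<le> alex a b (F k)" for k
    unfolding alex_def using assms(1) by (intro cSUP_upper[OF _ bdd]) auto
  then have "0 \<le> alex a b (F k)" for k
    by (rule order_trans[OF abs_ge_zero])
  then show "\<forall>\<^sub>F k in sequentially. 0 \<le> alex a b (F k)"
    by simp
  have "alex a b (F k) \<le> B k" for k
    unfolding alex_def using assms(1) bound by (intro cSUP_least) auto
  then show "\<forall>\<^sub>F k in sequentially. alex a b (F k) \<le> B k"
    by simp
qed (use assms(3) in auto)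

definition rl_alex_limit :: "real \<Rightarrow> real \<Rightarrow> real \<Rightarrow> distr \<Rightarrow> (real \<Rightarrow> real) \<Rightarrow> bool" where
  "rl_alex_limit a b n g G \<longleftrightarrow> continuous_on {a..b} G \<and> G a = 0 \<and> (\<forall>x. x \<notin> {a..b} \<longrightarrow> G x = 0) \<and>
     (\<forall>fk :: nat \<Rightarrow> real \<Rightarrow> real.
        (\<forall>k. fk k absolutely_integrable_on {a..b}) \<and>
        (\<lambda>k. alex a b (\<lambda>x. integral {a..x} (fk k) - hk_prim a b g x)) \<longlonglongrightarrow> 0
        \<longrightarrow> (\<lambda>k. alex a b (\<lambda>x. integral {a..x} (rl_L1 a n (fk k)) - G x)) \<longlonglongrightarrow> 0)"

lemma rl_lt1_prim_eq_The: "rl_lt1_prim a b n g = (THE G. rl_alex_limit a b n g G)"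
  by (simp add: rl_lt1_prim_def rl_alex_limit_def)

lemma continuous_primitive_approx:
  fixes Q :: "real \<Rightarrow> real"
  assumes "a \<le> b" "continuous_on {a..b} Q" "Q a = 0"
  obtains q where "\<And>k. continuous_on UNIV (q k)"
    and "(\<lambda>k. alex a b (\<lambda>x. integral {a..x} (q k) - Q x)) \<longlonglongrightarrow> 0"
proof -
  obtain p q where p: "\<And>k x. (p k has_real_derivative q k x) (at x)"
    and q: "\<And>k. continuous_on UNIV (q k)" and pQ: "\<And>k x. x \<in> {a..b} \<Longrightarrow> \<bar>Q x - p k x\<bar> \<le> 1 / Suc k"
    using C1_approximation[OF assms(2)] by metis
  have "\<bar>integral {a..x} (q k) - Q x\<bar> \<le> 2 / Suc k" if "x \<in> {a..b}" for k x
    using integral_eq_diff_of_deriv[OF p, of a x] pQ[OF that, of k] pQ[of a k] that assms(3)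
    by (simp add: abs_le_iff)
  moreover have "(\<lambda>k. 2 / real (Suc k)) \<longlonglongrightarrow> 0"
    by (rule LIMSEQ_Suc[OF lim_const_over_n])
  ultimately have "(\<lambda>k. alex a b (\<lambda>x. integral {a..x} (q k) - Q x)) \<longlonglongrightarrow> 0"
    by (rule alex_tendsto_0[OF assms(1)])
  with q show ?thesis by (rule that)
qed

lemma integral_rl_L1_diff_rl_L1:
  assumes n: "n > 0" and f: "f absolutely_integrable_on {a..b}" and P: "continuous_on {a..b} P"
    and x: "x \<in> {a..b}"
  shows "integral {a..x} (rl_L1 a n f) - rl_L1 a n P x = rl_L1 a n (\<lambda>s. integral {a..s} f - P s) x"
proof -
  have fx: "f absolutely_integrable_on {a..x}"
    using absolutely_integrable_on_subinterval[OF f] x by auto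
  have "rl_L1 a n (\<lambda>s. integral {a..s} f - P s) x = rl_L1 a n (\<lambda>s. integral {a..s} f) x - rl_L1 a n P x"
    using x fx
    by (intro rl_L1_add_diff(2) n continuous_on_subset[OF P] indefinite_integral_continuous_1
        set_lebesgue_integral_eq_integral(1)) auto
  then show ?thesis
    using rl_L1_integral(1)[OF n fx] rl_L1_primitive[OF n fx] by simp
qed

lemma rl_alex_limit_rl_L1:
  assumes ab: "a < b" and Q: "hk_primitive a b g Q" and n: "n > 0"
  shows "rl_alex_limit a b n g (\<lambda>x. if x \<in> {a..b} then rl_L1 a n Q x else 0)"
    (is "rl_alex_limit a b n g ?G")
proof -
  define P where "P = hk_prim a b g"
  have P: "continuous_on {a..b} P" "\<And>x. x \<in> {a..b} \<Longrightarrow> P x = Q x"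
    using hk_prim_eq_primitive[OF ab Q] by (auto simp: P_def hk_primitive_def)
  define C where "C = (b - a) powr n / Gamma (n + 1)"
  have "continuous_on {a..b} (rl_L1 a n Q)"
    using Q by (intro continuous_on_rl_L1 n) (simp add: hk_primitive_def)
  then have "continuous_on {a..b} ?G" by (rule continuous_on_eq) simp
  moreover have "(\<lambda>k. alex a b (\<lambda>x. integral {a..x} (rl_L1 a n (fk k)) - ?G x)) \<longlonglongrightarrow> 0"
    if fk: "\<forall>k. fk k absolutely_integrable_on {a..b}"
      and lim: "(\<lambda>k. alex a b (\<lambda>x. integral {a..x} (fk k) - P x)) \<longlonglongrightarrow> 0" for fk
  proof (rule alex_tendsto_0[where B="\<lambda>k. alex a b (\<lambda>x. integral {a..x} (fk k) - P x) * C"])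
    show "(\<lambda>k. alex a b (\<lambda>x. integral {a..x} (fk k) - P x) * C) \<longlonglongrightarrow> 0"
      by (rule tendsto_mult_left_zero[OF lim])
    fix k x assume x: "x \<in> {a..b}"
    have E: "continuous_on {a..b} (\<lambda>x. integral {a..x} (fk k) - P x)"
      using fk by (intro continuous_on_diff indefinite_integral_continuous_1 P(1)
          set_lebesgue_integral_eq_integral(1)) auto
    have "rl_L1 a n Q x = rl_L1 a n P x"
      using P(2) x by (intro rl_L1_cong) auto
    then have "integral {a..x} (rl_L1 a n (fk k)) - ?G x = rl_L1 a n (\<lambda>s. integral {a..s} (fk k) - P s) x"
      using integral_rl_L1_diff_rl_L1[OF n fk[rule_format] P(1) x] x by simp
    also have "\<bar>\<dots>\<bar> \<le> alex a b (\<lambda>x. integral {a..x} (fk k) - P x) * C"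
      unfolding C_def using abs_le_alex[OF E] by (intro abs_rl_L1_le[OF n x E]) auto
    finally show "\<bar>integral {a..x} (rl_L1 a n (fk k)) - ?G x\<bar>
        \<le> alex a b (\<lambda>x. integral {a..x} (fk k) - P x) * C" .
  qed (use ab in simp)
  ultimately show ?thesis
    unfolding rl_alex_limit_def P_def using ab by auto
qed

lemma rl_alex_limit_unique:
  assumes ab: "a < b" and Q: "hk_primitive a b g Q" and n: "n > 0"
    and G: "rl_alex_limit a b n g G" and H: "rl_alex_limit a b n g H"
  shows "G = H"
proof
  fix x
  show "G x = H x"
  proof (cases "x \<in> {a..b}")
    case False
    then show ?thesis using G H by (simp add: rl_alex_limit_def)
  next
    case x: True
    obtain q where q: "\<And>k. continuous_on UNIV (q k)"
      and q_lim: "(\<lambda>k. alex a b (\<lambda>x. integral {a..x} (q k) - hk_prim a b g x)) \<longlonglongrightarrow> 0"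
      using continuous_primitive_approx[of a b "hk_prim a b g"] hk_prim_eq_primitive(1)[OF ab Q] ab
      by (auto simp: hk_primitive_def)
    have q_int: "q k absolutely_integrable_on {a..b}" for k
      by (intro absolutely_integrable_continuous_real continuous_on_subset[OF q]) auto
    define R where "R k x = integral {a..x} (rl_L1 a n (q k))" for k x
    have R: "continuous_on {a..b} (R k)" for k
      unfolding R_def using rl_L1_integral(2)[OF n q_int]
      by (intro indefinite_integral_continuous_1 set_lebesgue_integral_eq_integral(1))
    have lim: "(\<lambda>k. alex a b (\<lambda>x. R k x - K x)) \<longlonglongrightarrow> 0" if "rl_alex_limit a b n g K" for K
      using that q_int q_lim unfolding rl_alex_limit_def R_def by blast
    have cont: "continuous_on {a..b} K" if "rl_alex_limit a b n g K" for K
      using that by (simp add: rl_alex_limit_def)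
    have "\<bar>G x - H x\<bar> \<le> alex a b (\<lambda>x. R k x - G x) + alex a b (\<lambda>x. R k x - H x)" for k
      using abs_le_alex[OF continuous_on_diff[OF R[of k] cont[OF G]] x]
        abs_le_alex[OF continuous_on_diff[OF R[of k] cont[OF H]] x]
      by arith
    moreover have "(\<lambda>k. alex a b (\<lambda>x. R k x - G x) + alex a b (\<lambda>x. R k x - H x)) \<longlonglongrightarrow> 0"
      using tendsto_add[OF lim[OF G] lim[OF H]] by simp
    ultimately have "\<bar>G x - H x\<bar> \<le> 0"
      by (intro tendsto_lowerbound[of _ 0 sequentially]) auto
    then show ?thesis by simp
  qed
qed

lemma rl_lt1_prim_eq_rl_L1:
  assumes "a < b" "hk_primitive a b g Q" "n > 0" "x \<in> {a..b}"
  shows "rl_lt1_prim a b n g x = rl_L1 a n Q x"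
proof -
  have "rl_lt1_prim a b n g = (\<lambda>x. if x \<in> {a..b} then rl_L1 a n Q x else 0)"
    unfolding rl_lt1_prim_eq_The
  proof (rule the_equality)
    show "rl_alex_limit a b n g (\<lambda>x. if x \<in> {a..b} then rl_L1 a n Q x else 0)"
      by (rule rl_alex_limit_rl_L1[OF assms(1-3)])
    show "G = (\<lambda>x. if x \<in> {a..b} then rl_L1 a n Q x else 0)" if "rl_alex_limit a b n g G" for G
      by (rule rl_alex_limit_unique[OF assms(1-3) that rl_alex_limit_rl_L1[OF assms(1-3)]])
  qed
  then show ?thesis using assms(4) by simp
qed

lemma RL_int_eq_Dd_rl_L1:
  assumes ab: "a < b" and \<nu>: "\<nu> > 0" and F: "hk_primitive a b f F" and \<phi>: "test_fun a b \<phi>"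
  shows "RL_int a b \<nu> f \<phi> = Dd (regular a b (rl_L1 a \<nu> F)) \<phi>"
proof -
  have F_int: "F absolutely_integrable_on {a..x}" if "x \<in> {a..b}" for x
    using absolutely_integrable_on_subinterval[OF hk_primitive_absolutely_integrable[OF F]] that
    by auto
  consider "\<nu> < 1" | "\<nu> = 1" | "\<nu> > 1" by linarith
  then show ?thesis
  proof cases
    case 1
    have "regular a b (rl_lt1_prim a b \<nu> f) = regular a b (rl_L1 a \<nu> F)"
      by (rule regular_cong) (rule rl_lt1_prim_eq_rl_L1[OF ab F \<nu>])
    then show ?thesis using 1 \<nu> by (simp add: RL_int_def)
  next
    case 2
    have "regular a b (rl_hk a b 1 f) = regular a b F"
      by (rule regular_cong) (rule rl_hk_1[OF ab F])
    then have "RL_int a b \<nu> f \<phi> = regular a b F \<phi>"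
      using 2 by (simp add: RL_int_def)
    also have "\<dots> = Dd (regular a b (\<lambda>x. integral {a..x} F)) \<phi>"
      using Dd_regular_primitive[OF _ hk_primitive_absolutely_integrable[OF F] \<phi>] ab by simp
    finally show ?thesis
      using 2 by (simp add: rl_L1_1)
  next
    case 3
    have int: "rl_L1 a (\<nu> - 1) F absolutely_integrable_on {a..b}"
      using rl_L1_integral(2)[where \<alpha>="\<nu> - 1", OF _ F_int[of b]] 3 ab by simp
    have "regular a b (rl_hk a b \<nu> f) = regular a b (rl_L1 a (\<nu> - 1) F)"
      by (rule regular_cong) (rule rl_hk_eq_rl_L1[OF ab F 3])
    then have "RL_int a b \<nu> f \<phi> = regular a b (rl_L1 a (\<nu> - 1) F) \<phi>"
      using 3 by (simp add: RL_int_def)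
    also have "\<dots> = Dd (regular a b (\<lambda>x. integral {a..x} (rl_L1 a (\<nu> - 1) F))) \<phi>"
      using Dd_regular_primitive[OF _ int \<phi>] ab by simp
    also have "regular a b (\<lambda>x. integral {a..x} (rl_L1 a (\<nu> - 1) F)) = regular a b (rl_L1 a \<nu> F)"
      using rl_L1_integral(1)[where \<alpha>="\<nu> - 1", OF _ F_int] 3 by (intro regular_cong) simp
    finally show ?thesis .
  qed
qed

lemma RL_int_regular:
  assumes ab: "a < b" and \<nu>: "\<nu> > 0" and u: "u absolutely_integrable_on {a..b}"
    and \<phi>: "test_fun a b \<phi>"
  shows "RL_int a b \<nu> (regular a b u) \<phi> = regular a b (rl_L1 a \<nu> u) \<phi>"
proof -
  have u_int: "u absolutely_integrable_on {a..x}" if "x \<in> {a..b}" for x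
    using absolutely_integrable_on_subinterval[OF u] that by auto
  have "RL_int a b \<nu> (regular a b u) \<phi> = Dd (regular a b (rl_L1 a \<nu> (\<lambda>x. integral {a..x} u))) \<phi>"
    by (rule RL_int_eq_Dd_rl_L1[OF ab \<nu> hk_primitive_regular[OF ab u] \<phi>])
  also have "regular a b (rl_L1 a \<nu> (\<lambda>x. integral {a..x} u)) = regular a b (\<lambda>x. integral {a..x} (rl_L1 a \<nu> u))"
    using rl_L1_primitive[OF \<nu> u_int] rl_L1_integral(1)[OF \<nu> u_int] by (intro regular_cong) simp
  also have "Dd \<dots> \<phi> = regular a b (rl_L1 a \<nu> u) \<phi>"
    using Dd_regular_primitive[OF _ rl_L1_integral(2)[OF \<nu> u] \<phi>] ab by simp
  finally show ?thesis .
qed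

lemma RL_int_eq_Dd_RL_int_regular:
  assumes ab: "a < b" and \<nu>: "\<nu> \<ge> 0" and F: "hk_primitive a b f F" and \<phi>: "test_fun a b \<phi>"
  shows "RL_int a b \<nu> f \<phi> = Dd (RL_int a b \<nu> (regular a b F)) \<phi>"
proof (cases "\<nu> = 0")
  case True
  then show ?thesis using F \<phi> by (simp add: RL_int_def hk_primitive_def distr_eq_def)
next
  case False
  then have \<nu>: "\<nu> > 0" using \<nu> by simp
  have "RL_int a b \<nu> f \<phi> = - regular a b (rl_L1 a \<nu> F) (deriv \<phi>)"
    by (simp add: RL_int_eq_Dd_rl_L1[OF ab \<nu> F \<phi>] Dd_def)
  also have "\<dots> = - RL_int a b \<nu> (regular a b F) (deriv \<phi>)"
    using RL_int_regular[OF ab \<nu> hk_primitive_absolutely_integrable[OF F] test_fun_deriv[OF \<phi>]] by simp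
  finally show ?thesis by (simp add: Dd_def)
qed

lemma Dpow_apply: "Dpow j T \<phi> = (-1) ^ j * T ((deriv ^^ j) \<phi>)"
proof (induction j arbitrary: \<phi>)
  case (Suc j)
  have "Dpow (Suc j) T \<phi> = - Dpow j T (deriv \<phi>)"
    by (simp add: Dpow_def Dd_def)
  also have "\<dots> = (-1) ^ Suc j * T ((deriv ^^ Suc j) \<phi>)"
    by (simp add: Suc.IH funpow_Suc_right del: funpow.simps)
  finally show ?case .
qed (simp add: Dpow_def)

lemma Dpow_RL_int:
  assumes "a < b" "\<nu> \<ge> 0" "hk_primitive a b f F" "test_fun a b \<phi>"
  shows "Dpow j (RL_int a b \<nu> f) \<phi> = (-1) ^ (j + 1) * RL_int a b \<nu> (regular a b F) ((deriv ^^ (j + 1)) \<phi>)"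
  using RL_int_eq_Dd_RL_int_regular[OF assms(1-3) test_fun_funpow_deriv[OF assms(4), of j]]
  by (simp add: Dpow_apply Dd_def)

lemma RL_der_lt1:
  assumes "0 < n" "n < 1"
  shows "RL_der a b n T = Dd (RL_int a b (1 - n) T)"
proof -
  have "\<lceil>n\<rceil> = 1" by (rule ceiling_unique) (use assms in auto)
  then show ?thesis by (simp add: RL_der_def Dpow_def)
qed

lemma RL_der_regular_lt1:
  assumes ab: "a < b" and n: "0 < n" "n < 1" and F: "F absolutely_integrable_on {a..b}"
  shows "RL_der a b n (regular a b F) = Dpow 2 (regular a b (rl_L1 a (1 - n) (\<lambda>x. integral {a..x} F)))"
proof -
  have "regular a b (rl_lt1_prim a b (1 - n) (regular a b F))
      = regular a b (rl_L1 a (1 - n) (\<lambda>x. integral {a..x} F))"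
    using n by (intro regular_cong rl_lt1_prim_eq_rl_L1[OF ab hk_primitive_regular[OF ab F]]) auto
  then show ?thesis
    using n by (simp add: RL_der_lt1 RL_int_def Dpow_def numeral_2_eq_2)
qed

section \<open>Temperate distributions\<close>

lemma smooth_fun_continuous_on_funpow_deriv:
  "smooth_fun \<phi> \<Longrightarrow> continuous_on S ((deriv ^^ k) \<phi>)"
  unfolding smooth_fun_def by (intro continuous_at_imp_continuous_on ballI DERIV_isCont) blast

lemma funpow_deriv_linear:
  assumes "smooth_fun \<phi>" "smooth_fun \<psi>"
  shows "(deriv ^^ k) (\<lambda>x. \<alpha> * \<phi> x + \<beta> * \<psi> x) = (\<lambda>x. \<alpha> * (deriv ^^ k) \<phi> x + \<beta> * (deriv ^^ k) \<psi> x)"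
proof (induction k)
  case (Suc k)
  have "((deriv ^^ k) \<phi> has_real_derivative (deriv ^^ Suc k) \<phi> x) (at x)"
    and "((deriv ^^ k) \<psi> has_real_derivative (deriv ^^ Suc k) \<psi> x) (at x)" for x
    using assms unfolding smooth_fun_def by blast+
  then have "deriv (\<lambda>x. \<alpha> * (deriv ^^ k) \<phi> x + \<beta> * (deriv ^^ k) \<psi> x)
      = (\<lambda>x. \<alpha> * (deriv ^^ Suc k) \<phi> x + \<beta> * (deriv ^^ Suc k) \<psi> x)"
    by (intro ext DERIV_imp_deriv DERIV_add DERIV_cmult)
  then show ?case using Suc.IH by simp
qed simp

lemma Dpow_regular_linear:
  assumes H: "continuous_on {a..b} H" and \<phi>: "smooth_fun \<phi>" and \<psi>: "smooth_fun \<psi>"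
  shows "Dpow k (regular a b H) (\<lambda>x. \<alpha> * \<phi> x + \<beta> * \<psi> x)
    = \<alpha> * Dpow k (regular a b H) \<phi> + \<beta> * Dpow k (regular a b H) \<psi>"
proof -
  have int: "(\<lambda>x. H x * (deriv ^^ k) g x) integrable_on {a..b}" if "smooth_fun g" for g
    by (intro integrable_continuous_interval continuous_on_mult H
        smooth_fun_continuous_on_funpow_deriv that)
  show ?thesis
    using integral_add[OF integrable_on_cmult_left[OF int[OF \<phi>], of \<alpha>]
        integrable_on_cmult_left[OF int[OF \<psi>], of \<beta>]]
    by (simp add: Dpow_apply regular_def funpow_deriv_linear[OF \<phi> \<psi>] algebra_simps)
qed

lemma abs_Dpow_regular_le_SUP:
  assumes ab: "a < b" and H: "continuous_on {a..b} H"
  obtains C where "C \<ge> 0"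
    and "\<And>\<phi>. smooth_fun \<phi> \<Longrightarrow> bdd_above (range (\<lambda>x. \<bar>(deriv ^^ k) \<phi> x\<bar>)) \<Longrightarrow>
      \<bar>Dpow k (regular a b H) \<phi>\<bar> \<le> C * (SUP x. \<bar>(deriv ^^ k) \<phi> x\<bar>)"
proof -
  have "bounded (H ` {a..b})"
    by (intro compact_imp_bounded compact_continuous_image H) auto
  then obtain M where M: "\<forall>x\<in>{a..b}. \<bar>H x\<bar> \<le> M" by (auto simp: bounded_real)
  have "0 \<le> M * (b - a)" using M ab by (force intro: mult_nonneg_nonneg)
  moreover have "\<bar>Dpow k (regular a b H) \<phi>\<bar> \<le> M * (b - a) * (SUP x. \<bar>(deriv ^^ k) \<phi> x\<bar>)"
    if \<phi>: "smooth_fun \<phi>" and bdd: "bdd_above (range (\<lambda>x. \<bar>(deriv ^^ k) \<phi> x\<bar>))" for \<phi>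
  proof -
    have "norm (integral {a..b} (\<lambda>x. H x * (deriv ^^ k) \<phi> x))
        \<le> integral {a..b} (\<lambda>x. M * (SUP x. \<bar>(deriv ^^ k) \<phi> x\<bar>))"
    proof (rule integral_norm_bound_integral)
      show "(\<lambda>x. H x * (deriv ^^ k) \<phi> x) integrable_on {a..b}"
        by (intro integrable_continuous_interval continuous_on_mult H
            smooth_fun_continuous_on_funpow_deriv \<phi>)
      fix x assume "x \<in> {a..b}"
      then show "norm (H x * (deriv ^^ k) \<phi> x) \<le> M * (SUP x. \<bar>(deriv ^^ k) \<phi> x\<bar>)"
        using M cSUP_upper[OF UNIV_I bdd, of x] by (simp add: abs_mult mult_mono')
    qed (rule integrable_const_ivl)
    then show ?thesis
      using ab by (simp add: Dpow_apply regular_def abs_mult mult_ac)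
  qed
  ultimately show ?thesis by (rule that)
qed

lemma SUP_abs_nonneg:
  fixes f :: "real \<Rightarrow> real"
  assumes "bdd_above (range (\<lambda>x. \<bar>f x\<bar>))"
  shows "0 \<le> (SUP x. \<bar>f x\<bar>)"
  using order_trans[OF abs_ge_zero cSUP_upper[OF UNIV_I assms]] .

lemma is_distribution_Dpow_regular:
  assumes ab: "a < b" and H: "continuous_on {a..b} H"
  shows "is_distribution a b (Dpow k (regular a b H))"
proof -
  obtain C where C: "C \<ge> 0" and le_SUP: "\<And>\<phi>. smooth_fun \<phi> \<Longrightarrow>
      bdd_above (range (\<lambda>x. \<bar>(deriv ^^ k) \<phi> x\<bar>)) \<Longrightarrow>
      \<bar>Dpow k (regular a b H) \<phi>\<bar> \<le> C * (SUP x. \<bar>(deriv ^^ k) \<phi> x\<bar>)"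
    using abs_Dpow_regular_le_SUP[OF ab H] by blast
  have bound: "\<bar>Dpow k (regular a b H) \<phi>\<bar> \<le> C * (\<Sum>j\<le>k. SUP x. \<bar>(deriv ^^ j) \<phi> x\<bar>)"
    if \<phi>: "test_fun a b \<phi>" for \<phi>
  proof -
    have bdd: "bdd_above (range (\<lambda>x. \<bar>(deriv ^^ j) \<phi> x\<bar>))" for j
      by (rule bdd_above_abs_test_fun[OF test_fun_funpow_deriv[OF \<phi>]])
    have "(SUP x. \<bar>(deriv ^^ k) \<phi> x\<bar>) \<le> (\<Sum>j\<le>k. SUP x. \<bar>(deriv ^^ j) \<phi> x\<bar>)"
      by (rule member_le_sum) (auto intro: SUP_abs_nonneg[OF bdd])
    then show ?thesis
      using \<phi> C by (intro order.trans[OF le_SUP[OF _ bdd] mult_left_mono]) (auto simp: test_fun_def)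
  qed
  show ?thesis
    unfolding is_distribution_def
  proof (intro conjI allI impI)
    fix \<phi> \<psi> \<alpha> \<beta> assume "test_fun a b \<phi> \<and> test_fun a b \<psi>"
    then show "Dpow k (regular a b H) (\<lambda>x. \<alpha> * \<phi> x + \<beta> * \<psi> x)
        = \<alpha> * Dpow k (regular a b H) \<phi> + \<beta> * Dpow k (regular a b H) \<psi>"
      by (intro Dpow_regular_linear H) (auto simp: test_fun_def)
  next
    fix c d :: real
    show "\<exists>C N. \<forall>\<phi>. test_fun a b \<phi> \<and> (\<forall>x. x \<notin> {c..d} \<longrightarrow> \<phi> x = 0) \<longrightarrow>
        \<bar>Dpow k (regular a b H) \<phi>\<bar> \<le> C * (\<Sum>j\<le>N. SUP x. \<bar>(deriv ^^ j) \<phi> x\<bar>)"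
      using bound by blast
  qed
qed

lemma bdd_above_abs_schwartz_fun:
  assumes "schwartz_fun \<phi>"
  shows "bdd_above (range (\<lambda>x. \<bar>x ^ i * (deriv ^^ j) \<phi> x\<bar>))"
proof -
  have "bounded (range (\<lambda>x. x ^ i * (deriv ^^ j) \<phi> x))"
    using assms by (simp add: schwartz_fun_def)
  then obtain B where "\<forall>x. \<bar>x ^ i * (deriv ^^ j) \<phi> x\<bar> \<le> B" by (auto simp: bounded_real)
  then show ?thesis by (intro bdd_aboveI2) auto
qed

lemma tempered_Dpow_regular:
  assumes ab: "a < b" and H: "continuous_on {a..b} H"
  shows "tempered (Dpow k (regular a b H))"
proof -
  obtain C where C: "C \<ge> 0" and le_SUP: "\<And>\<phi>. smooth_fun \<phi> \<Longrightarrow>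
      bdd_above (range (\<lambda>x. \<bar>(deriv ^^ k) \<phi> x\<bar>)) \<Longrightarrow>
      \<bar>Dpow k (regular a b H) \<phi>\<bar> \<le> C * (SUP x. \<bar>(deriv ^^ k) \<phi> x\<bar>)"
    using abs_Dpow_regular_le_SUP[OF ab H] by blast
  have bound: "\<bar>Dpow k (regular a b H) \<phi>\<bar> \<le> C * (\<Sum>j\<le>k. \<Sum>i\<le>k. SUP x. \<bar>x ^ i * (deriv ^^ j) \<phi> x\<bar>)"
    if \<phi>: "schwartz_fun \<phi>" for \<phi>
  proof -
    note bdd = bdd_above_abs_schwartz_fun[OF \<phi>]
    have "(SUP x. \<bar>(deriv ^^ k) \<phi> x\<bar>) \<le> (\<Sum>i\<le>k. SUP x. \<bar>x ^ i * (deriv ^^ k) \<phi> x\<bar>)"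
      using member_le_sum[of 0 "{..k}" "\<lambda>i. SUP x. \<bar>x ^ i * (deriv ^^ k) \<phi> x\<bar>"]
        SUP_abs_nonneg[OF bdd] by simp
    also have "\<dots> \<le> (\<Sum>j\<le>k. \<Sum>i\<le>k. SUP x. \<bar>x ^ i * (deriv ^^ j) \<phi> x\<bar>)"
      by (rule member_le_sum[of k "{..k}" "\<lambda>j. \<Sum>i\<le>k. SUP x. \<bar>x ^ i * (deriv ^^ j) \<phi> x\<bar>"])
         (auto intro: sum_nonneg SUP_abs_nonneg[OF bdd])
    finally show ?thesis
      using \<phi> C bdd[of 0 k]
      by (intro order.trans[OF le_SUP mult_left_mono]) (auto simp: schwartz_fun_def)
  qed
  show ?thesis
    unfolding tempered_def
  proof (intro conjI allI impI)
    fix \<phi> \<psi> \<alpha> \<beta> assume "schwartz_fun \<phi> \<and> schwartz_fun \<psi>"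
    then show "Dpow k (regular a b H) (\<lambda>x. \<alpha> * \<phi> x + \<beta> * \<psi> x)
        = \<alpha> * Dpow k (regular a b H) \<phi> + \<beta> * Dpow k (regular a b H) \<psi>"
      by (intro Dpow_regular_linear H) (auto simp: schwartz_fun_def)
  next
    show "\<exists>C N. \<forall>\<phi>. schwartz_fun \<phi> \<longrightarrow> \<bar>Dpow k (regular a b H) \<phi>\<bar>
        \<le> C * (\<Sum>j\<le>N. \<Sum>i\<le>N. SUP x. \<bar>x ^ i * (deriv ^^ j) \<phi> x\<bar>)"
      using bound by blast
  qed
qed

lemma temperate_on_Dpow_regular:
  "a < b \<Longrightarrow> continuous_on {a..b} H \<Longrightarrow> temperate_on a b (Dpow k (regular a b H))"
  unfolding temperate_on_def
  using is_distribution_Dpow_regular tempered_Dpow_regular by blast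

lemma temperate_on_RL_der_regular:
  assumes ab: "a < b" and n: "0 < n" "n < 1" and F: "F absolutely_integrable_on {a..b}"
  shows "temperate_on a b (RL_der a b n (regular a b F))"
proof -
  have "continuous_on {a..b} (\<lambda>x. integral {a..x} F)"
    using F by (intro indefinite_integral_continuous_1 set_lebesgue_integral_eq_integral(1))
  then show ?thesis
    using n by (simp add: RL_der_regular_lt1[OF ab n F] temperate_on_Dpow_regular[OF ab]
        continuous_on_rl_L1)
qed

lemma RL_der_eq_Dpow_RL_int_regular:
  assumes "a < b" "n \<ge> 0" "hk_primitive a b f F" "test_fun a b \<phi>"
  shows "RL_der a b n f \<phi> = Dpow (nat \<lceil>n\<rceil> + 1) (RL_int a b (real (nat \<lceil>n\<rceil>) - n) (regular a b F)) \<phi>"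
proof -
  have "real (nat \<lceil>n\<rceil>) - n \<ge> 0" using assms(2) by linarith
  note Dpow_eq = Dpow_RL_int[OF assms(1) this assms(3,4)]
  show ?thesis
    unfolding RL_der_def Dpow_eq by (simp add: Dpow_apply)
qed

theorem theorem4p4:
  fixes a b n :: real and f :: distr and F :: "real \<Rightarrow> real"
  assumes "a < b" and "n \<ge> 0"
    and "is_distribution a b f" and "HK_integrable a b f"
    and "hk_primitive a b f F"
  shows "distr_eq a b (RL_int a b n f) (Dd (RL_int a b n (regular a b F)))
    \<and> (\<forall>(j::nat) \<phi>. test_fun a b \<phi> \<longrightarrow>
         Dpow j (RL_int a b n f) \<phi>
           = (-1) ^ (j + 1) * RL_int a b n (regular a b F) ((deriv ^^ (j + 1)) \<phi>))
    \<and> distr_eq a b (RL_der a b n f)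
        (Dpow (nat \<lceil>n\<rceil> + 1) (RL_int a b (real (nat \<lceil>n\<rceil>) - n) (regular a b F)))
    \<and> (0 < n \<and> n < 1 \<longrightarrow>
         temperate_on a b (RL_der a b n (regular a b F))
         \<and> distr_eq a b (RL_der a b n (regular a b F)) (RL_int a b (1 - n) f))"
proof -
  note ab = assms(1) and n = assms(2) and F = assms(5)
  show ?thesis
    unfolding distr_eq_def
    using RL_int_eq_Dd_RL_int_regular[OF ab n F] Dpow_RL_int[OF ab n F]
      RL_der_eq_Dpow_RL_int_regular[OF ab n F]
      temperate_on_RL_der_regular[OF ab _ _ hk_primitive_absolutely_integrable[OF F]]
      RL_int_eq_Dd_RL_int_regular[OF ab _ F, of "1 - n"]
    by (auto simp: RL_der_lt1)
qed

end
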